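(* Let $p,q\ge2$ be natural numbers. Then there exists a c.p.c. order zero map $\varphi\colon M_p\to M_{q^\infty}$ such that $\varphi(1_p)$ is a Lebesgue contraction.
   Context: $M_{q^\infty}$ is the UHF-algebra given as the inductive limit of $M_{q^n}\to M_{q^{n+1}}$, $x\mapsto1_q\otimes x$. A c.p.c. order zero map is a completely positive contractive linear map $\varphi$ with $\varphi(x)\varphi(y)=0$ whenever $xy=0$. A positive contraction $h$ in $M_{q^\infty}$ is a Lebesgue contraction if $\tau(f(h))=\int_0^1f(t)\,dt$ for all $f\in C_0(0,1]$, where $\tau$ is the unique tracial state. *)

theory Defs
  imports "HOL-Analysis.Analysis" "Jordan_Normal_Form.Matrix" "Jordan_Normal_Form.Schur_Decomposition"
begin

definition vnorm :: "complex Matrix.vec \<Rightarrow> real" where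
  "vnorm v = sqrt (\<Sum>i<dim_vec v. (cmod (vec_index v i))^2)"

definition opnorm :: "complex mat \<Rightarrow> real" where
  "opnorm A = Sup {vnorm (A *\<^sub>v v) | v. v \<in> carrier_vec (dim_col A) \<and> vnorm v \<le> 1}"

text \<open>Normalised trace (the unique tracial state on M_n).\<close>
definition ntrace :: "complex mat \<Rightarrow> complex" where
  "ntrace A = (\<Sum>i<dim_row A. A $$ (i,i)) / of_nat (dim_row A)"

definition psd :: "complex mat \<Rightarrow> bool" where
  "psd A \<longleftrightarrow> A \<in> carrier_mat (dim_row A) (dim_row A) \<and>
     (\<exists>B. B \<in> carrier_mat (dim_row A) (dim_row A) \<and> A = mat_adjoint B * B)"

definition unitary_mat :: "nat \<Rightarrow> complex mat \<Rightarrow> bool" where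
  "unitary_mat n U \<longleftrightarrow> U \<in> carrier_mat n n \<and> mat_adjoint U * U = 1\<^sub>m n"

definition diag_of :: "nat \<Rightarrow> (nat \<Rightarrow> complex) \<Rightarrow> complex mat" where
  "diag_of n c = mat n n (\<lambda>(i,j). if i = j then c i else 0)"

definition mat_fun :: "(real \<Rightarrow> complex) \<Rightarrow> complex mat \<Rightarrow> complex mat" where
  "mat_fun f A = (SOME B. \<exists>U d. unitary_mat (dim_row A) U \<and>
      A = U * diag_of (dim_row A) (\<lambda>i. complex_of_real (d i)) * mat_adjoint U \<and>
      B = U * diag_of (dim_row A) (\<lambda>i. f (d i)) * mat_adjoint U)"

text \<open>Block matrix in M_n(M_m) = M_{n m}: block (i,j) is X i j.\<close>
definition blockmat :: "nat \<Rightarrow> nat \<Rightarrow> (nat \<Rightarrow> nat \<Rightarrow> complex mat) \<Rightarrow> complex mat" where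
  "blockmat n m X = mat (n*m) (n*m) (\<lambda>(i,j). X (i div m) (j div m) $$ (i mod m, j mod m))"

text \<open>Connecting map M_{q^n} \<rightarrow> M_{q^(n+1)}, x \<mapsto> 1_q \<otimes> x.\<close>
definition kron_id :: "nat \<Rightarrow> complex mat \<Rightarrow> complex mat" where
  "kron_id q x = mat (q * dim_row x) (q * dim_col x)
     (\<lambda>(i,j). if i div dim_row x = j div dim_col x
              then x $$ (i mod dim_row x, j mod dim_col x) else 0)"

definition uhf_emb :: "nat \<Rightarrow> nat \<Rightarrow> nat \<Rightarrow> complex mat \<Rightarrow> complex mat" where
  "uhf_emb q m n x = (kron_id q ^^ (n - m)) x"

text \<open>M_{q^\<infinity>} is modelled as the completion of the union of the M_{q^k}: an element is
  represented by a sequence s with s k \<in> M_{q^k} which is Cauchy along the connecting maps;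
  two representatives are equal iff their difference tends to 0 in norm.\<close>
definition uhf_elem :: "nat \<Rightarrow> (nat \<Rightarrow> complex mat) \<Rightarrow> bool" where
  "uhf_elem q s \<longleftrightarrow> (\<forall>k. s k \<in> carrier_mat (q^k) (q^k)) \<and>
     (\<forall>\<epsilon>>0. \<exists>N. \<forall>m n. N \<le> m \<longrightarrow> m \<le> n \<longrightarrow> opnorm (uhf_emb q m n (s m) - s n) < \<epsilon>)"

definition uhf_eq :: "(nat \<Rightarrow> complex mat) \<Rightarrow> (nat \<Rightarrow> complex mat) \<Rightarrow> bool" where
  "uhf_eq s t \<longleftrightarrow> (\<lambda>k. opnorm (s k - t k)) \<longlonglongrightarrow> 0"

definition uhf_norm :: "(nat \<Rightarrow> complex mat) \<Rightarrow> real" where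
  "uhf_norm s = lim (\<lambda>k. opnorm (s k))"

text \<open>Positivity: the positive cone of the inductive limit is the closure of the union of
  the positive cones of the M_{q^k}.\<close>
definition uhf_pos :: "nat \<Rightarrow> (nat \<Rightarrow> complex mat) \<Rightarrow> bool" where
  "uhf_pos q s \<longleftrightarrow> (\<exists>t. (\<forall>k. t k \<in> carrier_mat (q^k) (q^k) \<and> psd (t k)) \<and> uhf_eq s t)"

text \<open>Positivity in M_n(M_{q^\<infinity>}) = inductive limit of M_n(M_{q^k}); X i j (i,j<n) are
  elements of M_{q^\<infinity>}.\<close>
definition uhf_matpos :: "nat \<Rightarrow> nat \<Rightarrow> (nat \<Rightarrow> nat \<Rightarrow> nat \<Rightarrow> complex mat) \<Rightarrow> bool" where
  "uhf_matpos q n X \<longleftrightarrow> (\<exists>t. (\<forall>k. t k \<in> carrier_mat (n * q^k) (n * q^k) \<and> psd (t k)) \<and>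
      (\<lambda>k. opnorm (blockmat n (q^k) (\<lambda>i j. X i j k) - t k)) \<longlonglongrightarrow> 0)"

definition cpc_order_zero :: "nat \<Rightarrow> nat \<Rightarrow> (complex mat \<Rightarrow> nat \<Rightarrow> complex mat) \<Rightarrow> bool" where
  "cpc_order_zero p q \<phi> \<longleftrightarrow>
     \<comment> \<open>maps M_p into M_{q^\<infinity>}\<close>
     (\<forall>x \<in> carrier_mat p p. uhf_elem q (\<phi> x)) \<and>
     \<comment> \<open>linear\<close>
     (\<forall>x \<in> carrier_mat p p. \<forall>y \<in> carrier_mat p p. \<forall>c::complex.
        uhf_eq (\<phi> (c \<cdot>\<^sub>m x + y)) (\<lambda>k. c \<cdot>\<^sub>m \<phi> x k + \<phi> y k)) \<and>
     \<comment> \<open>completely positive\<close>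
     (\<forall>n\<ge>1. \<forall>X. (\<forall>i<n. \<forall>j<n. X i j \<in> carrier_mat p p) \<longrightarrow> psd (blockmat n p X) \<longrightarrow>
        uhf_matpos q n (\<lambda>i j. \<phi> (X i j))) \<and>
     \<comment> \<open>contractive\<close>
     (\<forall>x \<in> carrier_mat p p. uhf_norm (\<phi> x) \<le> opnorm x) \<and>
     \<comment> \<open>order zero\<close>
     (\<forall>x \<in> carrier_mat p p. \<forall>y \<in> carrier_mat p p. x * y = 0\<^sub>m p p \<longrightarrow>
        uhf_eq (\<lambda>k. \<phi> x k * \<phi> y k) (\<lambda>k. 0\<^sub>m (q^k) (q^k)))"

text \<open>h is a positive contraction with tau(f(h)) = integral_0^1 f for all f in C_0(0,1]
  (= continuous functions on [0,1] vanishing at 0).  tau(f(h)) is computed as the limit of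
  the normalised traces of f(t k) for positive contractions t k \<in> M_{q^k} converging to h.\<close>
definition lebesgue_contraction :: "nat \<Rightarrow> (nat \<Rightarrow> complex mat) \<Rightarrow> bool" where
  "lebesgue_contraction q h \<longleftrightarrow> uhf_elem q h \<and> uhf_pos q h \<and> uhf_norm h \<le> 1 \<and>
     (\<forall>f :: real \<Rightarrow> complex. continuous_on {0..1} f \<and> f 0 = 0 \<longrightarrow>
        (\<exists>t. (\<forall>k. t k \<in> carrier_mat (q^k) (q^k) \<and> psd (t k) \<and> opnorm (t k) \<le> 1) \<and>
             uhf_eq h t \<and>
             (\<lambda>k. ntrace (mat_fun f (t k))) \<longlonglongrightarrow> integral {0..1} f))"

end

theory Submission
  imports Defs
begin

text \<open>Write \<open>q^n = p G_n + R_n\<close> with \<open>R_n < p\<close>. At level \<open>n\<close> the coordinates of \<open>\<complex>^(q^n)\<close>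
  are split into \<open>G_n\<close> blocks of size \<open>p\<close> and \<open>R_n\<close> spare coordinates, and \<open>\<phi>_n(x)\<close> is the
  direct sum over the blocks of \<open>w_(n,k) x\<close>, with weights \<open>w_(n,k) = 1 - p (k + 1) / q^n\<close> in
  \<open>[0, 1]\<close>. A sum of nonnegative multiples of copies of the identity representation of \<open>M_p\<close> is
  c.p.c. and of order zero; \<open>\<phi>_n(1)\<close> is diagonal with every weight repeated \<open>p\<close> times, so
  \<open>\<tau>(f(\<phi>_n(1)))\<close> is a Riemann sum of \<open>f\<close> with mesh \<open>p / q^n\<close>, which tends to \<open>\<integral>\<^sub>0\<^sup>1 f\<close>.

  The splittings are nested along \<open>x \<mapsto> 1_q \<otimes> x\<close>: the \<open>q\<close> copies of a block of level \<open>n\<close> are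
  blocks of level \<open>n + 1\<close> whose weights differ from the old one by at most \<open>p / q^n\<close>, and the
  copies of the spare coordinates are packed into new blocks of weight at most \<open>p / q^n\<close>. Hence
  \<open>(\<phi>_n(x))\<^sub>n\<close> is Cauchy along the connecting maps.\<close>

unbundle no vec_syntax

section \<open>Euclidean and operator norms\<close>

lemma index_mult_mat_sum:
  assumes "i < dim_row A" "j < dim_col B" "dim_col A = dim_row B"
  shows "(A * B) $$ (i,j) = (\<Sum>k<dim_col A. A $$ (i,k) * B $$ (k,j))"
  using assms by (simp add: scalar_prod_def atLeast0LessThan)

lemma index_mult_mat_vec_sum:
  assumes "i < dim_row A" "dim_vec v = dim_col A"
  shows "(A *\<^sub>v v) $ i = (\<Sum>j<dim_col A. A $$ (i,j) * v $ j)"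
  using assms by (simp add: scalar_prod_def atLeast0LessThan)

lemma mat_adjoint_alt:
  "mat_adjoint (A :: complex mat) = mat (dim_col A) (dim_row A) (\<lambda>(i,j). cnj (A $$ (j,i)))"
  by (rule eq_matI) (auto simp: mat_adjoint_def mat_of_rows_index)

lemma mat_adjoint_one: "mat_adjoint (1\<^sub>m n :: complex mat) = 1\<^sub>m n"
  by (rule eq_matI) (auto simp: mat_adjoint_alt)

lemma vnorm_nonneg: "vnorm v \<ge> 0"
  unfolding vnorm_def by (simp add: sum_nonneg)

lemma vnorm_power2: "(vnorm v)^2 = (\<Sum>i<dim_vec v. (cmod (v $ i))^2)"
  unfolding vnorm_def by (simp add: sum_nonneg)

lemma vnorm_eq_iff_power2_eq: "vnorm u = vnorm v \<longleftrightarrow> (vnorm u)^2 = (vnorm v)^2"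
  using vnorm_nonneg by (metis power2_eq_iff_nonneg)

lemma norm_vec_index_le_vnorm: "i < dim_vec v \<Longrightarrow> cmod (v $ i) \<le> vnorm v"
  unfolding vnorm_def by (rule real_le_rsqrt, rule member_le_sum) auto

lemma vnorm_smult: "vnorm (c \<cdot>\<^sub>v v) = cmod c * vnorm v"
proof -
  have "(\<Sum>i<dim_vec v. (cmod ((c \<cdot>\<^sub>v v) $ i))^2) = (cmod c)^2 * (\<Sum>i<dim_vec v. (cmod (v $ i))^2)"
    by (simp add: sum_distrib_left norm_mult power_mult_distrib)
  then show ?thesis unfolding vnorm_def by (simp add: real_sqrt_mult)
qed

lemma vnorm_eq_0_imp_zero:
  assumes "vnorm v = 0"
  shows "v = 0\<^sub>v (dim_vec v)"
proof (rule eq_vecI)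
  fix i assume "i < dim_vec (0\<^sub>v (dim_vec v))"
  then show "v $ i = 0\<^sub>v (dim_vec v) $ i"
    using assms norm_vec_index_le_vnorm[of i v] by simp
qed simp

lemma opnorm_set_bdd_above:
  "bdd_above {vnorm (A *\<^sub>v v) | v. v \<in> carrier_vec (dim_col A) \<and> vnorm v \<le> 1}"
proof -
  have "vnorm (A *\<^sub>v v) \<le> sqrt (\<Sum>i<dim_row A. (\<Sum>j<dim_col A. cmod (A $$ (i,j)))^2)"
    if v: "v \<in> carrier_vec (dim_col A)" "vnorm v \<le> 1" for v
  proof -
    have "cmod ((A *\<^sub>v v) $ i) \<le> (\<Sum>j<dim_col A. cmod (A $$ (i,j)))" if "i < dim_row A" for i
    proof -
      have "cmod ((A *\<^sub>v v) $ i) = cmod (\<Sum>j<dim_col A. A $$ (i,j) * v $ j)"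
        using v that by (subst index_mult_mat_vec_sum) auto
      also have "\<dots> \<le> (\<Sum>j<dim_col A. cmod (A $$ (i,j) * v $ j))"
        by (rule norm_sum)
      also have "\<dots> \<le> (\<Sum>j<dim_col A. cmod (A $$ (i,j)))"
        using v norm_vec_index_le_vnorm[of _ v]
        by (intro sum_mono) (auto simp: norm_mult intro!: mult_left_le order_trans[OF _ v(2)])
      finally show ?thesis .
    qed
    then show ?thesis
      unfolding vnorm_def by (auto intro!: real_sqrt_le_mono sum_mono power_mono)
  qed
  then show ?thesis unfolding bdd_above_def by blast
qed

lemma vnorm_le_opnorm:
  "v \<in> carrier_vec (dim_col A) \<Longrightarrow> vnorm v \<le> 1 \<Longrightarrow> vnorm (A *\<^sub>v v) \<le> opnorm A"
  unfolding opnorm_def by (rule cSup_upper[OF _ opnorm_set_bdd_above]) auto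

lemma opnorm_nonneg: "opnorm A \<ge> 0"
  using vnorm_le_opnorm[of "0\<^sub>v (dim_col A)" A] vnorm_nonneg order_trans
  by (fastforce simp: vnorm_def)

lemma vnorm_mult_mat_vec_le:
  assumes v: "v \<in> carrier_vec (dim_col A)"
  shows "vnorm (A *\<^sub>v v) \<le> opnorm A * vnorm v"
proof (cases "vnorm v = 0")
  case True
  then have "v = 0\<^sub>v (dim_col A)" using v vnorm_eq_0_imp_zero by fastforce
  then show ?thesis using True by (simp add: vnorm_def)
next
  case False
  then have pos: "vnorm v > 0" using vnorm_nonneg[of v] by linarith
  define u where "u = (1 / vnorm v) \<cdot>\<^sub>v v"
  have "vnorm (A *\<^sub>v u) \<le> opnorm A"
    using v pos by (intro vnorm_le_opnorm) (auto simp: u_def vnorm_smult norm_divide)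
  moreover have "A *\<^sub>v u = (1 / vnorm v) \<cdot>\<^sub>v (A *\<^sub>v v)"
    unfolding u_def using v by (intro mult_mat_vec[of _ "dim_row A" "dim_col A"]) auto
  ultimately show ?thesis
    using pos by (simp add: vnorm_smult norm_divide divide_le_eq mult.commute)
qed

lemma opnorm_le:
  assumes "C \<ge> 0" "\<And>v. v \<in> carrier_vec (dim_col A) \<Longrightarrow> vnorm (A *\<^sub>v v) \<le> C * vnorm v"
  shows "opnorm A \<le> C"
  unfolding opnorm_def
proof (rule cSup_least)
  show "{vnorm (A *\<^sub>v v) | v. v \<in> carrier_vec (dim_col A) \<and> vnorm v \<le> 1} \<noteq> {}"
    by (auto intro!: exI[of _ "0\<^sub>v (dim_col A)"] simp: vnorm_def)
qed (use assms in \<open>auto intro: order_trans mult_left_le\<close>)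

lemma opnorm_zero: "opnorm (0\<^sub>m n m) = 0"
  using opnorm_le[of 0 "0\<^sub>m n m"] opnorm_nonneg[of "0\<^sub>m n m"] by (simp add: vnorm_def)

lemma opnorm_one: "opnorm (1\<^sub>m n) \<le> 1"
  by (rule opnorm_le) auto

lemma uhf_eq_refl: "uhf_eq s s"
proof -
  have "opnorm (s k - s k) = 0" for k
    using minus_r_inv_mat[of "s k"] opnorm_zero by (metis carrier_matI)
  then show ?thesis unfolding uhf_eq_def by simp
qed


section \<open>Block matrices\<close>

lemma mult_add_less_mult:
  fixes i s n m :: nat
  assumes "i < n" "s < m"
  shows "i*m + s < n*m"
proof -
  have "i*m + s < Suc i * m" using assms(2) by simp
  also have "\<dots> \<le> n*m" using assms(1) by (intro mult_le_mono1) simp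
  finally show ?thesis .
qed

definition mat_block :: "nat \<Rightarrow> complex mat \<Rightarrow> nat \<Rightarrow> nat \<Rightarrow> complex mat" where
  "mat_block m B l i = mat m m (\<lambda>(a,b). B $$ (l*m + a, i*m + b))"

lemma blockmat_mat_block: "B \<in> carrier_mat (n*m) (n*m) \<Longrightarrow> blockmat n m (mat_block m B) = B"
proof (rule eq_matI)
  fix r1 r2 assume "B \<in> carrier_mat (n*m) (n*m)" "r1 < dim_row B" "r2 < dim_col B"
  moreover from this have "m > 0" by (cases m) auto
  ultimately show "blockmat n m (mat_block m B) $$ (r1,r2) = B $$ (r1,r2)"
    by (simp add: blockmat_def mat_block_def less_mult_imp_div_less mult.commute)
qed (auto simp: blockmat_def)

lemma index_adjoint_mult_blockmat:
  assumes Y: "\<And>l i. l < n \<Longrightarrow> i < n \<Longrightarrow> Y l i \<in> carrier_mat m m"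
    and ij: "i < n" "j < n" and st: "s < m" "t < m"
  shows "(mat_adjoint (blockmat n m Y) * blockmat n m Y) $$ (i*m + s, j*m + t)
      = (\<Sum>l<n. (mat_adjoint (Y l i) * Y l j) $$ (s,t))"
proof -
  have "(mat_adjoint (blockmat n m Y) * blockmat n m Y) $$ (i*m + s, j*m + t)
      = (\<Sum>r<n*m. cnj (blockmat n m Y $$ (r, i*m + s)) * blockmat n m Y $$ (r, j*m + t))"
    using ij st mult_add_less_mult by (subst index_mult_mat_sum) (auto simp: blockmat_def mat_adjoint_alt)
  also have "\<dots> = (\<Sum>l<n. \<Sum>u<m. cnj (blockmat n m Y $$ (u + l*m, i*m + s))
                                 * blockmat n m Y $$ (u + l*m, j*m + t))"
    by (rule sum_mult_product)
  also have "\<dots> = (\<Sum>l<n. \<Sum>u<m. cnj (Y l i $$ (u,s)) * Y l j $$ (u,t))"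
    using ij st mult_add_less_mult[of _ n _ m] by (intro sum.cong refl) (simp add: blockmat_def add.commute)
  also have "\<dots> = (\<Sum>l<n. (mat_adjoint (Y l i) * Y l j) $$ (s,t))"
  proof (intro sum.cong refl)
    fix l assume "l \<in> {..<n}"
    then have "Y l i \<in> carrier_mat m m" "Y l j \<in> carrier_mat m m" using Y ij by auto
    then show "(\<Sum>u<m. cnj (Y l i $$ (u,s)) * Y l j $$ (u,t)) = (mat_adjoint (Y l i) * Y l j) $$ (s,t)"
      using st by (subst index_mult_mat_sum) (auto simp: mat_adjoint_alt)
  qed
  finally show ?thesis .
qed

lemma psd_blockmat_factor:
  assumes "psd (blockmat n m X)"
  obtains Y where "\<And>l i. Y l i \<in> carrier_mat m m"
    "\<And>i j s t. i < n \<Longrightarrow> j < n \<Longrightarrow> s < m \<Longrightarrow> t < m \<Longrightarrow>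
       X i j $$ (s,t) = (\<Sum>l<n. (mat_adjoint (Y l i) * Y l j) $$ (s,t))"
proof -
  obtain B where B: "B \<in> carrier_mat (n*m) (n*m)" and XB: "blockmat n m X = mat_adjoint B * B"
    using assms by (auto simp: psd_def blockmat_def)
  have "X i j $$ (s,t) = (\<Sum>l<n. (mat_adjoint (mat_block m B l i) * mat_block m B l j) $$ (s,t))"
    if "i < n" "j < n" "s < m" "t < m" for i j s t
  proof -
    have "X i j $$ (s,t) = blockmat n m X $$ (i*m + s, j*m + t)"
      using that mult_add_less_mult by (simp add: blockmat_def)
    also have "\<dots> = (mat_adjoint (blockmat n m (mat_block m B)) * blockmat n m (mat_block m B))
        $$ (i*m + s, j*m + t)"
      unfolding XB blockmat_mat_block[OF B] ..
    also have "\<dots> = (\<Sum>l<n. (mat_adjoint (mat_block m B l i) * mat_block m B l j) $$ (s,t))"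
      using that by (intro index_adjoint_mult_blockmat) (auto simp: mat_block_def)
    finally show ?thesis .
  qed
  then show ?thesis using that[of "mat_block m B"] by (simp add: mat_block_def)
qed

lemma psd_blockmatI:
  assumes Y: "\<And>l i. l < n \<Longrightarrow> i < n \<Longrightarrow> Y l i \<in> carrier_mat m m"
    and Z: "\<And>i j s t. i < n \<Longrightarrow> j < n \<Longrightarrow> s < m \<Longrightarrow> t < m \<Longrightarrow>
       Z i j $$ (s,t) = (\<Sum>l<n. (mat_adjoint (Y l i) * Y l j) $$ (s,t))"
  shows "psd (blockmat n m Z)"
proof -
  define C where "C = blockmat n m Y"
  have C: "C \<in> carrier_mat (n*m) (n*m)" "dim_row (mat_adjoint C) = n*m"
    by (simp_all add: C_def blockmat_def mat_adjoint_alt)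
  have "blockmat n m Z = mat_adjoint C * C"
  proof (rule eq_matI)
    fix r1 r2 assume "r1 < dim_row (mat_adjoint C * C)" "r2 < dim_col (mat_adjoint C * C)"
    then have r: "r1 < n*m" "r2 < n*m" using C by auto
    then have "m > 0" by (cases m) auto
    then have idx: "r1 div m < n" "r2 div m < n" "r1 mod m < m" "r2 mod m < m"
      using r by (auto simp: less_mult_imp_div_less)
    have "(mat_adjoint C * C) $$ ((r1 div m)*m + r1 mod m, (r2 div m)*m + r2 mod m)
        = (\<Sum>l<n. (mat_adjoint (Y l (r1 div m)) * Y l (r2 div m)) $$ (r1 mod m, r2 mod m))"
      unfolding C_def using Y idx by (intro index_adjoint_mult_blockmat)
    then show "blockmat n m Z $$ (r1,r2) = (mat_adjoint C * C) $$ (r1,r2)"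
      using r Z[OF idx] by (simp add: blockmat_def)
  qed (use C in \<open>auto simp: blockmat_def\<close>)
  moreover have "mat_adjoint C * C \<in> carrier_mat (n*m) (n*m)"
    using C by (intro mult_carrier_mat[of _ _ "n*m"]) (auto simp: mat_adjoint_alt)
  ultimately show ?thesis
    unfolding psd_def using C by auto
qed

section \<open>Block-diagonal amplification along a layout\<close>

definition block_slots :: "nat \<Rightarrow> nat \<Rightarrow> nat \<Rightarrow> ((nat \<times> nat) + nat) set" where
  "block_slots G p R = Inl ` ({..<G} \<times> {..<p}) \<union> Inr ` {..<R}"

lemma sum_block_slots:
  "(\<Sum>z\<in>block_slots G p R. H z) = (\<Sum>k<G. \<Sum>a<p. H (Inl (k,a))) + (\<Sum>l<R. H (Inr l))"
proof -
  have "(\<Sum>z\<in>block_slots G p R. H z) = (\<Sum>z\<in>{..<G} \<times> {..<p}. H (Inl z)) + (\<Sum>l<R. H (Inr l))"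
    unfolding block_slots_def
    by (subst sum.union_disjoint) (auto simp: sum.reindex inj_on_def)
  then show ?thesis by (simp add: sum.cartesian_product)
qed

lemma card_block_slots: "card (block_slots G p R) = G * p + R"
  unfolding block_slots_def
  by (subst card_Un_disjoint) (auto simp: card_image card_cartesian_product inj_on_def)

text \<open>A slot \<open>Inl (k, a)\<close> is position \<open>a\<close> of the \<open>k\<close>-th copy of \<open>\<complex>^p\<close>, a slot \<open>Inr l\<close> is a spare
  coordinate. If \<open>L\<close> identifies \<open>{..<N}\<close> with the slots, \<open>amplify L N c x\<close> is the matrix of
  \<open>c 0 x \<oplus> \<dots> \<oplus> c (G - 1) x \<oplus> 0_R\<close> in the coordinates given by \<open>L\<close>.\<close>

definition amplify_entry ::
    "(nat \<Rightarrow> (nat \<times> nat) + nat) \<Rightarrow> (nat \<Rightarrow> complex) \<Rightarrow> complex mat \<Rightarrow> nat \<Rightarrow> nat \<Rightarrow> complex" where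
  "amplify_entry L c x s t =
     (case L s of
        Inl (k,a) \<Rightarrow> (case L t of Inl (k',b) \<Rightarrow> if k = k' then c k * x $$ (a,b) else 0 | Inr _ \<Rightarrow> 0)
      | Inr _ \<Rightarrow> 0)"

definition amplify ::
    "(nat \<Rightarrow> (nat \<times> nat) + nat) \<Rightarrow> nat \<Rightarrow> (nat \<Rightarrow> complex) \<Rightarrow> complex mat \<Rightarrow> complex mat" where
  "amplify L N c x = mat N N (\<lambda>(s,t). amplify_entry L c x s t)"

lemma amplify_carrier [simp]:
  "amplify L N c x \<in> carrier_mat N N" "dim_row (amplify L N c x) = N" "dim_col (amplify L N c x) = N"
  by (auto simp: amplify_def)

lemma index_amplify [simp]: "s < N \<Longrightarrow> t < N \<Longrightarrow> amplify L N c x $$ (s,t) = amplify_entry L c x s t"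
  by (simp add: amplify_def)

lemma amplify_diff_weights: "amplify L N c x - amplify L N d x = amplify L N (\<lambda>k. c k - d k) x"
  by (rule eq_matI) (auto simp: amplify_entry_def algebra_simps split: sum.splits prod.splits)

lemma amplify_entry_eq_0I:
  "(case L s of Inl (K,a) \<Rightarrow> c K = 0 | Inr _ \<Rightarrow> True) \<or> (case L t of Inl (K,b) \<Rightarrow> c K = 0 | Inr _ \<Rightarrow> True)
    \<Longrightarrow> amplify_entry L c x s t = 0"
  by (auto simp: amplify_entry_def split: sum.splits)

locale block_layout =
  fixes L :: "nat \<Rightarrow> (nat \<times> nat) + nat" and N G p R :: nat
  assumes bij: "bij_betw L {..<N} (block_slots G p R)"
begin

definition pos :: "(nat \<times> nat) + nat \<Rightarrow> nat" where
  "pos = inv_into {..<N} L"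

lemma L_pos: "z \<in> block_slots G p R \<Longrightarrow> L (pos z) = z"
  unfolding pos_def by (rule bij_betw_inv_into_right[OF bij])

lemma pos_L: "s < N \<Longrightarrow> pos (L s) = s"
  unfolding pos_def using bij_betw_inv_into_left[OF bij] by simp

lemma pos_less: "z \<in> block_slots G p R \<Longrightarrow> pos z < N"
  using bij_betw_inv_into[OF bij] bij_betwE unfolding pos_def by fastforce

lemma slot_cases:
  assumes "s < N"
  obtains k a where "k < G" "a < p" "L s = Inl (k,a)" | l where "l < R" "L s = Inr l"
  using bij_betwE[OF bij] assms unfolding block_slots_def by blast

lemma L_Inl_less: "s < N \<Longrightarrow> L s = Inl (k,a) \<Longrightarrow> k < G \<and> a < p"
  by (cases rule: slot_cases) auto

lemma pos_Inl: "k < G \<Longrightarrow> a < p \<Longrightarrow> pos (Inl (k,a)) < N \<and> L (pos (Inl (k,a))) = Inl (k,a)"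
  using pos_less L_pos by (auto simp: block_slots_def)

lemma pos_Inr: "l < R \<Longrightarrow> pos (Inr l) < N \<and> L (pos (Inr l)) = Inr l"
  using pos_less L_pos by (auto simp: block_slots_def)

lemma sum_by_slots:
  "(\<Sum>t<N. H t) = (\<Sum>k<G. \<Sum>a<p. H (pos (Inl (k,a)))) + (\<Sum>l<R. H (pos (Inr l)))"
  using sum.reindex_bij_betw[OF bij_betw_inv_into[OF bij], of H] sum_block_slots[of "H \<circ> pos"]
  by (simp add: pos_def)

lemma sum_comp_L:
  "(\<Sum>t<N. F (L t)) = (\<Sum>k<G. \<Sum>a<p. F (Inl (k,a))) + (\<Sum>l<R. F (Inr l))"
  using sum_by_slots[of "F \<circ> L"] by (simp add: pos_Inl pos_Inr)

lemma amplify_entry_row_sum: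
  assumes "s < N" "L s = Inl (k,a)"
  shows "(\<Sum>t<N. amplify_entry L c x s t * g t) = c k * (\<Sum>b<p. x $$ (a,b) * g (pos (Inl (k,b))))"
proof -
  have "k < G" using L_Inl_less[OF assms] by simp
  have "(\<Sum>t<N. amplify_entry L c x s t * g t)
      = (\<Sum>k'<G. \<Sum>b<p. (if k = k' then c k * x $$ (a,b) else 0) * g (pos (Inl (k',b))))"
    by (subst sum_by_slots) (simp add: amplify_entry_def assms pos_Inl pos_Inr)
  also have "\<dots> = (\<Sum>k'<G. if k = k' then (\<Sum>b<p. c k * x $$ (a,b) * g (pos (Inl (k',b)))) else 0)"
    by (intro sum.cong) auto
  also have "\<dots> = c k * (\<Sum>b<p. x $$ (a,b) * g (pos (Inl (k,b))))"
    using \<open>k < G\<close> by (simp add: sum_distrib_left mult.assoc)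
  finally show ?thesis .
qed

definition block_part :: "complex Matrix.vec \<Rightarrow> nat \<Rightarrow> complex Matrix.vec" where
  "block_part v k = vec p (\<lambda>b. v $ pos (Inl (k,b)))"

lemma block_part_carrier [simp]: "block_part v k \<in> carrier_vec p"
  by (simp add: block_part_def)

lemma vnorm_power2_by_slots:
  assumes "v \<in> carrier_vec N"
  shows "(vnorm v)^2 = (\<Sum>k<G. (vnorm (block_part v k))^2) + (\<Sum>l<R. (cmod (v $ pos (Inr l)))^2)"
  using assms by (simp add: vnorm_power2 sum_by_slots[of "\<lambda>t. (cmod (v $ t))^2"] block_part_def)

lemma amplify_mult_vec_Inl:
  assumes "x \<in> carrier_mat p p" "v \<in> carrier_vec N" "k < G" "a < p"
  shows "(amplify L N c x *\<^sub>v v) $ pos (Inl (k,a)) = c k * (x *\<^sub>v block_part v k) $ a"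
proof -
  have "(amplify L N c x *\<^sub>v v) $ pos (Inl (k,a)) = c k * (\<Sum>b<p. x $$ (a,b) * v $ pos (Inl (k,b)))"
    using assms pos_Inl[OF assms(3,4)]
    by (subst index_mult_mat_vec_sum) (auto simp: amplify_entry_row_sum)
  also have "(\<Sum>b<p. x $$ (a,b) * v $ pos (Inl (k,b))) = (x *\<^sub>v block_part v k) $ a"
    using assms by (simp add: scalar_prod_def atLeast0LessThan block_part_def)
  finally show ?thesis .
qed

lemma amplify_mult_vec_Inr:
  assumes "v \<in> carrier_vec N" "l < R"
  shows "(amplify L N c x *\<^sub>v v) $ pos (Inr l) = 0"
  using assms pos_Inr[OF assms(2)] by (subst index_mult_mat_vec_sum) (auto simp: amplify_entry_def)

lemma vnorm_amplify_mult_vec: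
  assumes x: "x \<in> carrier_mat p p" and v: "v \<in> carrier_vec N"
  shows "(vnorm (amplify L N c x *\<^sub>v v))^2 = (\<Sum>k<G. (cmod (c k))^2 * (vnorm (x *\<^sub>v block_part v k))^2)"
proof -
  have "block_part (amplify L N c x *\<^sub>v v) k = c k \<cdot>\<^sub>v (x *\<^sub>v block_part v k)" if "k < G" for k
    using x v that by (intro eq_vecI) (auto simp: amplify_mult_vec_Inl block_part_def)
  moreover have "amplify L N c x *\<^sub>v v \<in> carrier_vec N"
    using amplify_carrier(1) v by (rule mult_mat_vec_carrier)
  ultimately show ?thesis
    using v vnorm_power2_by_slots[of "amplify L N c x *\<^sub>v v"]
    by (simp add: amplify_mult_vec_Inr vnorm_smult power_mult_distrib)
qed

lemma opnorm_amplify_le: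
  assumes x: "x \<in> carrier_mat p p" and B: "B \<ge> 0" and c: "\<And>k. k < G \<Longrightarrow> cmod (c k) \<le> B"
  shows "opnorm (amplify L N c x) \<le> B * opnorm x"
proof (rule opnorm_le)
  fix v :: "complex Matrix.vec" assume "v \<in> carrier_vec (dim_col (amplify L N c x))"
  then have v: "v \<in> carrier_vec N" by simp
  have "(cmod (c k))^2 * (vnorm (x *\<^sub>v block_part v k))^2 \<le> (B * (opnorm x * vnorm (block_part v k)))^2"
    if "k < G" for k
    unfolding power_mult_distrib[of B]
    using x c[OF that] vnorm_mult_mat_vec_le[of "block_part v k" x]
    by (intro mult_mono power_mono) (auto simp: vnorm_nonneg)
  then have "(vnorm (amplify L N c x *\<^sub>v v))^2 \<le> (\<Sum>k<G. (B * opnorm x * vnorm (block_part v k))^2)"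
    unfolding vnorm_amplify_mult_vec[OF x v] by (intro sum_mono) (simp add: mult.assoc)
  also have "\<dots> = (B * opnorm x)^2 * (\<Sum>k<G. (vnorm (block_part v k))^2)"
    by (simp add: power_mult_distrib sum_distrib_left)
  also have "\<dots> \<le> (B * opnorm x * vnorm v)^2"
    unfolding power_mult_distrib[of _ "vnorm v"] vnorm_power2_by_slots[OF v]
    by (intro mult_left_mono) (simp_all add: sum_nonneg)
  finally show "vnorm (amplify L N c x *\<^sub>v v) \<le> B * opnorm x * vnorm v"
    by (rule power2_le_imp_le) (use B opnorm_nonneg vnorm_nonneg in simp)
qed (use B opnorm_nonneg in simp)

definition block_embed :: "nat \<Rightarrow> complex Matrix.vec \<Rightarrow> complex Matrix.vec" where
  "block_embed k0 v = vec N (\<lambda>t. case L t of Inl (k,b) \<Rightarrow> if k = k0 then v $ b else 0 | Inr _ \<Rightarrow> 0)"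

lemma block_embed_carrier [simp]: "block_embed k0 v \<in> carrier_vec N"
  by (simp add: block_embed_def)

lemma block_part_block_embed:
  "v \<in> carrier_vec p \<Longrightarrow> k < G \<Longrightarrow> block_part (block_embed k0 v) k = (if k = k0 then v else 0\<^sub>v p)"
  by (intro eq_vecI) (auto simp: block_part_def block_embed_def pos_Inl)

lemma vnorm_block_embed:
  assumes v: "v \<in> carrier_vec p" and k0: "k0 < G"
  shows "vnorm (block_embed k0 v) = vnorm v"
proof -
  have "block_embed k0 v $ pos (Inr l) = 0" if "l < R" for l
    using pos_Inr[OF that] by (simp add: block_embed_def)
  then have "(vnorm (block_embed k0 v))^2 = (\<Sum>k<G. (vnorm (block_part (block_embed k0 v) k))^2)"
    by (simp add: vnorm_power2_by_slots)
  also have "\<dots> = (\<Sum>k<G. if k = k0 then (vnorm v)^2 else 0)"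
    using v by (intro sum.cong) (auto simp: block_part_block_embed vnorm_def)
  finally show ?thesis
    using k0 by (simp add: vnorm_eq_iff_power2_eq)
qed

lemma vnorm_amplify_block_embed:
  assumes x: "x \<in> carrier_mat p p" and v: "v \<in> carrier_vec p" and k0: "k0 < G"
  shows "vnorm (amplify L N c x *\<^sub>v block_embed k0 v) = cmod (c k0) * vnorm (x *\<^sub>v v)"
proof -
  have "(vnorm (amplify L N c x *\<^sub>v block_embed k0 v))^2
      = (\<Sum>k<G. (cmod (c k))^2 * (vnorm (x *\<^sub>v block_part (block_embed k0 v) k))^2)"
    using x by (simp add: vnorm_amplify_mult_vec)
  also have "\<dots> = (\<Sum>k<G. if k = k0 then (cmod (c k))^2 * (vnorm (x *\<^sub>v v))^2 else 0)"
    using x v by (intro sum.cong) (auto simp: block_part_block_embed vnorm_def)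
  also have "\<dots> = (cmod (c k0) * vnorm (x *\<^sub>v v))^2"
    using k0 by (simp add: power_mult_distrib)
  finally show ?thesis
    using vnorm_nonneg by (simp add: power2_eq_iff_nonneg)
qed

lemma opnorm_amplify_ge:
  assumes x: "x \<in> carrier_mat p p" and k0: "k0 < G"
  shows "cmod (c k0) * opnorm x \<le> opnorm (amplify L N c x)"
proof (cases "c k0 = 0")
  case False
  have "cmod (c k0) * vnorm (x *\<^sub>v v) \<le> opnorm (amplify L N c x) * vnorm v"
    if v: "v \<in> carrier_vec p" for v
    using vnorm_mult_mat_vec_le[of "block_embed k0 v" "amplify L N c x"]
    by (simp add: vnorm_amplify_block_embed[OF x v k0] vnorm_block_embed[OF v k0])
  then have "opnorm x \<le> opnorm (amplify L N c x) / cmod (c k0)"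
    using x False opnorm_nonneg by (intro opnorm_le) (auto simp: field_simps)
  then show ?thesis using False by (simp add: field_simps)
qed (simp add: opnorm_nonneg)

lemma amplify_mult:
  assumes x: "x \<in> carrier_mat p p" and y: "y \<in> carrier_mat p p"
  shows "amplify L N c x * amplify L N d y = amplify L N (\<lambda>k. c k * d k) (x * y)"
proof (rule eq_matI)
  fix s t assume "s < dim_row (amplify L N (\<lambda>k. c k * d k) (x * y))"
    "t < dim_col (amplify L N (\<lambda>k. c k * d k) (x * y))"
  then have st: "s < N" "t < N" by auto
  have "(amplify L N c x * amplify L N d y) $$ (s,t)
      = (\<Sum>u<N. amplify_entry L c x s u * amplify_entry L d y u t)"
    using st by (subst index_mult_mat_sum) auto
  also have "\<dots> = amplify_entry L (\<lambda>k. c k * d k) (x * y) s t"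
  proof (cases rule: slot_cases[OF st(1)])
    case (1 k a)
    have row: "(\<Sum>u<N. amplify_entry L c x s u * amplify_entry L d y u t)
        = c k * (\<Sum>b'<p. x $$ (a,b') * amplify_entry L d y (pos (Inl (k,b'))) t)"
      by (rule amplify_entry_row_sum[OF st(1) \<open>L s = Inl (k,a)\<close>])
    show ?thesis
    proof (cases rule: slot_cases[OF st(2)])
      case (1 k' b)
      have "(x * y) $$ (a,b) = (\<Sum>b'<p. x $$ (a,b') * y $$ (b',b))"
        using x y \<open>a < p\<close> \<open>b < p\<close> by (subst index_mult_mat_sum) auto
      then show ?thesis
        unfolding row using \<open>L s = Inl (k,a)\<close> \<open>L t = Inl (k',b)\<close> \<open>k < G\<close>
        by (simp add: amplify_entry_def pos_Inl sum_distrib_left mult_ac)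
    qed (unfold row, simp add: amplify_entry_def pos_Inl \<open>L s = Inl (k,a)\<close> \<open>k < G\<close>)
  qed (simp add: amplify_entry_def)
  finally show "(amplify L N c x * amplify L N d y) $$ (s,t)
      = amplify L N (\<lambda>k. c k * d k) (x * y) $$ (s,t)"
    using st by simp
qed auto

lemma amplify_linear:
  assumes "x \<in> carrier_mat p p" "y \<in> carrier_mat p p"
  shows "amplify L N c (a \<cdot>\<^sub>m x + y) = a \<cdot>\<^sub>m amplify L N c x + amplify L N c y"
  using assms L_Inl_less
  by (intro eq_matI) (auto simp: amplify_entry_def algebra_simps split: sum.splits prod.splits)

lemma amplify_zero: "amplify L N c (0\<^sub>m p p) = 0\<^sub>m N N"
  using L_Inl_less
  by (intro eq_matI) (auto simp: amplify_entry_def split: sum.splits prod.splits)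

lemma amplify_one:
  "amplify L N c (1\<^sub>m p) = diag_of N (\<lambda>s. case L s of Inl (k,a) \<Rightarrow> c k | Inr _ \<Rightarrow> 0)"
  using L_Inl_less pos_L
  by (intro eq_matI) (auto simp: amplify_entry_def diag_of_def split: sum.splits prod.splits, metis+)

lemma amplify_adjoint:
  assumes "x \<in> carrier_mat p p"
  shows "mat_adjoint (amplify L N c x) = amplify L N (\<lambda>k. cnj (c k)) (mat_adjoint x)"
  using assms L_Inl_less
  by (intro eq_matI) (auto simp: mat_adjoint_alt amplify_entry_def split: sum.splits prod.splits)

lemma amplify_cong: "(\<And>k. k < G \<Longrightarrow> c k = d k) \<Longrightarrow> amplify L N c x = amplify L N d x"
  using L_Inl_less
  by (intro eq_matI) (auto simp: amplify_entry_def split: sum.splits prod.splits)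

lemma amplify_entry_sum:
  assumes "\<And>a b. a < p \<Longrightarrow> b < p \<Longrightarrow> y $$ (a,b) = (\<Sum>l<n. Z l $$ (a,b))" "s < N" "t < N"
  shows "amplify_entry L c y s t = (\<Sum>l<n. amplify_entry L c (Z l) s t)"
  using assms L_Inl_less by (auto simp: amplify_entry_def sum_distrib_left split: sum.splits)

text \<open>If \<open>X i j = \<Sum>\<^sub>l (Y l i)\<^sup>* Y l j\<close>, the amplifications of the \<open>Y l i\<close> with weights \<open>\<surd>w\<close>
  are Gram factors of the amplified block matrix.\<close>

lemma psd_blockmat_amplify:
  assumes psd: "psd (blockmat n p X)" and w: "\<And>k. k < G \<Longrightarrow> w k \<ge> 0"
  shows "psd (blockmat n N (\<lambda>i j. amplify L N (\<lambda>k. of_real (w k)) (X i j)))"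
proof -
  obtain Y where Y: "\<And>l i. Y l i \<in> carrier_mat p p"
    and X: "\<And>i j a b. i < n \<Longrightarrow> j < n \<Longrightarrow> a < p \<Longrightarrow> b < p \<Longrightarrow>
      X i j $$ (a,b) = (\<Sum>l<n. (mat_adjoint (Y l i) * Y l j) $$ (a,b))"
    using psd_blockmat_factor[OF psd] by blast
  define sw where "sw k = complex_of_real (sqrt (w k))" for k
  have "cnj (sw k) * sw k = of_real (w k)" if "k < G" for k
    using w[OF that] by (simp add: sw_def flip: of_real_mult)
  then have gram: "mat_adjoint (amplify L N sw (Y l i)) * amplify L N sw (Y l j)
      = amplify L N (\<lambda>k. of_real (w k)) (mat_adjoint (Y l i) * Y l j)" for l i j
    using Y[of l i] Y[of l j] mat_adjoint_alt[of "Y l i"]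
    by (simp add: amplify_adjoint amplify_mult cong: amplify_cong)
  show ?thesis
  proof (rule psd_blockmatI[of n "\<lambda>l i. amplify L N sw (Y l i)"])
    fix i j s t assume "i < n" "j < n" "s < N" "t < N"
    then show "amplify L N (\<lambda>k. of_real (w k)) (X i j) $$ (s,t)
        = (\<Sum>l<n. (mat_adjoint (amplify L N sw (Y l i)) * amplify L N sw (Y l j)) $$ (s,t))"
      unfolding gram using X by (simp add: amplify_entry_sum[where Z = "\<lambda>l. mat_adjoint (Y l i) * Y l j"])
  qed simp
qed

end

section \<open>Functional calculus of a real diagonal matrix\<close>

lemma diag_of_carrier [simp]:
  "diag_of N g \<in> carrier_mat N N" "dim_row (diag_of N g) = N" "dim_col (diag_of N g) = N"
  by (auto simp: diag_of_def)

lemma index_diag_of_mult: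
  assumes "A \<in> carrier_mat N M" "s < N" "i < M"
  shows "(diag_of N g * A) $$ (s,i) = g s * A $$ (s,i)"
proof -
  have "(diag_of N g * A) $$ (s,i) = (\<Sum>k<N. diag_of N g $$ (s,k) * A $$ (k,i))"
    using assms by (subst index_mult_mat_sum) auto
  also have "\<dots> = (\<Sum>k<N. if k = s then g s * A $$ (s,i) else 0)"
    using assms by (intro sum.cong) (auto simp: diag_of_def)
  finally show ?thesis using assms(2) by simp
qed

lemma index_mult_diag_of:
  assumes "A \<in> carrier_mat M N" "s < M" "i < N"
  shows "(A * diag_of N g) $$ (s,i) = A $$ (s,i) * g i"
proof -
  have "(A * diag_of N g) $$ (s,i) = (\<Sum>k<N. A $$ (s,k) * diag_of N g $$ (k,i))"
    using assms by (subst index_mult_mat_sum) auto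
  also have "\<dots> = (\<Sum>k<N. if k = i then A $$ (s,i) * g i else 0)"
    using assms by (intro sum.cong) (auto simp: diag_of_def)
  finally show ?thesis using assms(3) by simp
qed

lemma unitary_mult_adjoint:
  assumes "unitary_mat N U"
  shows "U * mat_adjoint U = 1\<^sub>m N"
proof -
  have U: "U \<in> carrier_mat N N" "mat_adjoint U * U = 1\<^sub>m N"
    using assms by (auto simp: unitary_mat_def)
  then have "mat_adjoint U \<in> carrier_mat N N" by (simp add: mat_adjoint_alt)
  then show ?thesis using U by (rule mat_mult_left_right_inverse)
qed

text \<open>Comparing \<open>diag e \<cdot> U = U \<cdot> diag d\<close> entrywise: \<open>U\<close> only links equal eigenvalues.\<close>

lemma unitary_diag_eigen:
  assumes U: "unitary_mat N U"
    and eq: "diag_of N (\<lambda>s. complex_of_real (e s)) = U * diag_of N (\<lambda>i. complex_of_real (d i)) * mat_adjoint U"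
    and si: "s < N" "i < N" "U $$ (s,i) \<noteq> 0"
  shows "e s = d i"
proof -
  have Uc: "U \<in> carrier_mat N N" and UU: "mat_adjoint U * U = 1\<^sub>m N"
    using U by (auto simp: unitary_mat_def)
  have "diag_of N (\<lambda>s. complex_of_real (e s)) * U
      = U * diag_of N (\<lambda>i. complex_of_real (d i)) * (mat_adjoint U * U)"
    unfolding eq using Uc by (subst assoc_mult_mat[of _ N N _ N _ N]) (auto simp: mat_adjoint_alt)
  also have "\<dots> = U * diag_of N (\<lambda>i. complex_of_real (d i))"
    using Uc by (simp add: UU)
  finally have "complex_of_real (e s) * U $$ (s,i) = U $$ (s,i) * complex_of_real (d i)"
    using Uc si by (metis index_diag_of_mult index_mult_diag_of)
  then show ?thesis using si(3) by (simp add: mult.commute)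
qed

lemma mat_fun_diag_obtain:
  obtains U d where "unitary_mat N U"
    "diag_of N (\<lambda>s. complex_of_real (e s)) = U * diag_of N (\<lambda>i. complex_of_real (d i)) * mat_adjoint U"
    "mat_fun f (diag_of N (\<lambda>s. complex_of_real (e s))) = U * diag_of N (\<lambda>i. f (d i)) * mat_adjoint U"
proof -
  let ?A = "diag_of N (\<lambda>s. complex_of_real (e s))"
  let ?spectral = "\<lambda>B. \<exists>U d. unitary_mat N U \<and>
      ?A = U * diag_of N (\<lambda>i. complex_of_real (d i)) * mat_adjoint U \<and>
      B = U * diag_of N (\<lambda>i. f (d i)) * mat_adjoint U"
  have "?spectral (1\<^sub>m N * diag_of N (\<lambda>i. f (e i)) * mat_adjoint (1\<^sub>m N))"
    by (intro exI[of _ "1\<^sub>m N"] exI[of _ e]) (auto simp: unitary_mat_def mat_adjoint_one)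
  then have "?spectral (mat_fun f ?A)"
    unfolding mat_fun_def diag_of_carrier by (rule someI)
  then show ?thesis using that by blast
qed

lemma index_mat_fun_diag:
  assumes s: "s < N"
  shows "mat_fun f (diag_of N (\<lambda>s. complex_of_real (e s))) $$ (s,s) = f (e s)"
proof -
  obtain U d where U: "unitary_mat N U"
    and AU: "diag_of N (\<lambda>s. complex_of_real (e s)) = U * diag_of N (\<lambda>i. complex_of_real (d i)) * mat_adjoint U"
    and fA: "mat_fun f (diag_of N (\<lambda>s. complex_of_real (e s))) = U * diag_of N (\<lambda>i. f (d i)) * mat_adjoint U"
    by (rule mat_fun_diag_obtain)
  have Uc: "U \<in> carrier_mat N N" using U by (simp add: unitary_mat_def)
  have "mat_fun f (diag_of N (\<lambda>s. complex_of_real (e s))) $$ (s,s)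
      = (\<Sum>i<N. U $$ (s,i) * f (d i) * cnj (U $$ (s,i)))"
    unfolding fA using Uc s
    by (subst index_mult_mat_sum) (auto simp: index_mult_diag_of mat_adjoint_alt simp del: index_mult_mat(1) intro!: sum.cong)
  also have "\<dots> = (\<Sum>i<N. f (e s) * (U $$ (s,i) * cnj (U $$ (s,i))))"
    using unitary_diag_eigen[OF U AU s] by (intro sum.cong refl) force
  also have "\<dots> = f (e s) * (U * mat_adjoint U) $$ (s,s)"
    using Uc s by (subst index_mult_mat_sum) (auto simp: mat_adjoint_alt sum_distrib_left)
  also have "\<dots> = f (e s)"
    using s by (simp add: unitary_mult_adjoint[OF U])
  finally show ?thesis .
qed

lemma ntrace_mat_fun_diag:
  "ntrace (mat_fun f (diag_of N (\<lambda>s. complex_of_real (e s)))) = (\<Sum>s<N. f (e s)) / of_nat N"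
proof -
  obtain U d where "unitary_mat N U"
    "mat_fun f (diag_of N (\<lambda>s. complex_of_real (e s))) = U * diag_of N (\<lambda>i. f (d i)) * mat_adjoint U"
    by (rule mat_fun_diag_obtain)
  then have "dim_row (mat_fun f (diag_of N (\<lambda>s. complex_of_real (e s)))) = N"
    by (auto simp: unitary_mat_def)
  then show ?thesis by (simp add: ntrace_def index_mat_fun_diag)
qed

section \<open>Riemann sums\<close>

lemma integral_sum_steps:
  fixes f :: "real \<Rightarrow> 'a::banach"
  assumes f: "f integrable_on {0..1}" and h: "h > 0"
  shows "real G * h \<le> 1 \<Longrightarrow>
    integral {1 - real G * h..1} f = (\<Sum>k<G. integral {1 - real (Suc k) * h..1 - real k * h} f)"
proof (induction G)
  case (Suc G)
  have "f integrable_on {1 - real (Suc G) * h..1}"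
    by (rule integrable_subinterval_real[OF f]) (use Suc.prems in auto)
  then have "integral {1 - real (Suc G) * h..1} f
      = integral {1 - real (Suc G) * h..1 - real G * h} f + integral {1 - real G * h..1} f"
    using h Suc.prems by (intro Henstock_Kurzweil_Integration.integral_combine[symmetric]) (auto simp: distrib_right)
  then show ?case using Suc h by (simp add: distrib_right)
qed simp

lemma norm_left_riemann_step_le:
  fixes f :: "real \<Rightarrow> 'a::banach"
  assumes "h \<ge> 0" "continuous_on {x..x+h} f" "\<And>t. t \<in> {x..x+h} \<Longrightarrow> norm (f t - f x) \<le> \<eta>"
  shows "norm (h *\<^sub>R f x - integral {x..x+h} f) \<le> \<eta> * h"
proof -
  have "h *\<^sub>R f x - integral {x..x+h} f = - integral {x..x+h} (\<lambda>t. f t - f x)"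
    using assms by (simp add: integral_diff integrable_continuous_interval content_real)
  also have "norm \<dots> \<le> \<eta> * (x + h - x)"
    using assms by (subst norm_minus_cancel, intro integral_bound) (auto intro!: continuous_intros)
  finally show ?thesis by simp
qed

lemma riemann_sum_error_le:
  fixes f :: "real \<Rightarrow> 'a::banach"
  assumes cont: "continuous_on {0..1} f" and M: "\<And>x. x \<in> {0..1} \<Longrightarrow> norm (f x) \<le> M"
    and osc: "\<And>x t. 0 \<le> x \<Longrightarrow> x \<le> t \<Longrightarrow> t \<le> x + h \<Longrightarrow> t \<le> 1 \<Longrightarrow> norm (f t - f x) \<le> \<eta>"
    and \<eta>: "\<eta> \<ge> 0" and h: "h > 0" and G: "real G * h \<le> 1" "1 - real G * h \<le> h"
  shows "norm (h *\<^sub>R (\<Sum>k<G. f (1 - real (Suc k) * h)) - integral {0..1} f) \<le> \<eta> + M * h"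
proof -
  define a where "a = 1 - real G * h"
  have a: "0 \<le> a" "a \<le> h" "a \<le> 1" using G h unfolding a_def by auto
  have "integral {0..1} f = integral {0..a} f + integral {a..1} f"
    using a h G cont
    by (intro Henstock_Kurzweil_Integration.integral_combine[symmetric] integrable_continuous_interval)
      (auto simp: a_def)
  also have "integral {a..1} f = (\<Sum>k<G. integral {1 - real (Suc k) * h..1 - real k * h} f)"
    unfolding a_def using cont h G(1) by (intro integral_sum_steps integrable_continuous_interval)
  finally have split: "h *\<^sub>R (\<Sum>k<G. f (1 - real (Suc k) * h)) - integral {0..1} f
      = (\<Sum>k<G. h *\<^sub>R f (1 - real (Suc k) * h) - integral {1 - real (Suc k) * h..1 - real k * h} f)
        - integral {0..a} f"
    by (simp add: scaleR_sum_right sum_subtractf algebra_simps)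
  have step: "norm (h *\<^sub>R f (1 - real (Suc k) * h) - integral {1 - real (Suc k) * h..1 - real k * h} f)
      \<le> \<eta> * h" if "k < G" for k
  proof -
    define x where "x = 1 - real (Suc k) * h"
    have "real (Suc k) * h \<le> real G * h" using that h by (intro mult_right_mono) auto
    then have sub: "{x..x+h} \<subseteq> {0..1}" using G h unfolding x_def by (auto simp: algebra_simps)
    have shift: "1 - real (Suc k) * h + h = 1 - real k * h" by (simp add: algebra_simps)
    have "norm (h *\<^sub>R f x - integral {x..x+h} f) \<le> \<eta> * h"
      using h sub osc continuous_on_subset[OF cont sub]
      by (intro norm_left_riemann_step_le) auto
    then show ?thesis unfolding x_def shift .
  qed
  have "norm (integral {0..a} f) \<le> M * (a - 0)"
    using a M by (intro integral_bound continuous_on_subset[OF cont]) auto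
  also have "\<dots> \<le> M * h"
    using a M[of 0] by (intro mult_left_mono) (auto intro: order_trans[OF norm_ge_zero])
  finally have head: "norm (integral {0..a} f) \<le> M * h" .
  have "norm (h *\<^sub>R (\<Sum>k<G. f (1 - real (Suc k) * h)) - integral {0..1} f)
      \<le> norm (\<Sum>k<G. h *\<^sub>R f (1 - real (Suc k) * h) - integral {1 - real (Suc k) * h..1 - real k * h} f)
        + norm (integral {0..a} f)"
    unfolding split by (rule norm_triangle_ineq4)
  also have "\<dots> \<le> (\<Sum>k<G. \<eta> * h) + M * h"
    using step head by (intro add_mono order_trans[OF norm_sum sum_mono]) blast+
  also have "(\<Sum>k<G. \<eta> * h) \<le> \<eta>"
    using G \<eta> mult_left_le[of "real G * h" \<eta>] by (simp add: mult.commute mult.left_commute)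
  finally show ?thesis by simp
qed

lemma riemann_sum_approx:
  fixes f :: "real \<Rightarrow> 'a::banach"
  assumes cont: "continuous_on {0..1} f" and e: "e > 0"
  obtains \<delta> where "\<delta> > 0" "\<And>h G. 0 < h \<Longrightarrow> h < \<delta> \<Longrightarrow> real G * h \<le> 1 \<Longrightarrow> 1 - real G * h \<le> h \<Longrightarrow>
    norm (h *\<^sub>R (\<Sum>k<G. f (1 - real (Suc k) * h)) - integral {0..1} f) \<le> e"
proof -
  obtain M where M: "\<And>x. x \<in> {0..1} \<Longrightarrow> norm (f x) \<le> M" "M \<ge> 0"
    using compact_imp_bounded[OF compact_continuous_image[OF cont compact_Icc]]
    unfolding bounded_iff by (metis image_eqI norm_ge_zero order_trans)
  obtain d where "d > 0"
    and d: "\<And>x t. x \<in> {0..1} \<Longrightarrow> t \<in> {0..1} \<Longrightarrow> dist t x < d \<Longrightarrow> dist (f t) (f x) < e/2"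
    using compact_uniformly_continuous[OF cont compact_Icc] e
    unfolding uniformly_continuous_on_def by (meson half_gt_zero)
  define \<delta> where "\<delta> = min d (e / (2 * (M + 1)))"
  have "norm (h *\<^sub>R (\<Sum>k<G. f (1 - real (Suc k) * h)) - integral {0..1} f) \<le> e"
    if h: "0 < h" "h < \<delta>" and G: "real G * h \<le> 1" "1 - real G * h \<le> h" for h G
  proof -
    have "norm (f t - f x) \<le> e/2" if "0 \<le> x" "x \<le> t" "t \<le> x + h" "t \<le> 1" for x t
      using d[of x t] that h by (auto simp: dist_norm dist_real_def \<delta>_def)
    then have "norm (h *\<^sub>R (\<Sum>k<G. f (1 - real (Suc k) * h)) - integral {0..1} f) \<le> e/2 + M * h"
      using cont M(1) e h(1) G by (intro riemann_sum_error_le) auto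
    also have "M * h \<le> M * (e / (2 * (M + 1)))"
      using h M(2) by (intro mult_left_mono) (auto simp: \<delta>_def)
    also have "\<dots> \<le> e / 2"
      using M(2) e by (simp add: field_simps)
    finally show ?thesis by simp
  qed
  moreover have "\<delta> > 0" using \<open>d > 0\<close> e M(2) by (simp add: \<delta>_def)
  ultimately show ?thesis using that by blast
qed

lemma riemann_sum_tendsto:
  fixes f :: "real \<Rightarrow> 'a::banach"
  assumes cont: "continuous_on {0..1} f" and h: "h \<longlonglongrightarrow> 0" "\<And>n. h n > 0"
    and G: "\<And>n. real (G n) * h n \<le> 1" "\<And>n. 1 - real (G n) * h n \<le> h n"
  shows "(\<lambda>n. h n *\<^sub>R (\<Sum>k<G n. f (1 - real (Suc k) * h n))) \<longlonglongrightarrow> integral {0..1} f"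
proof (rule LIMSEQ_I)
  fix r :: real assume "r > 0"
  then obtain \<delta> where "\<delta> > 0" and approx: "\<And>h G. 0 < h \<Longrightarrow> h < \<delta> \<Longrightarrow> real G * h \<le> 1 \<Longrightarrow>
      1 - real G * h \<le> h \<Longrightarrow> norm (h *\<^sub>R (\<Sum>k<G. f (1 - real (Suc k) * h)) - integral {0..1} f) \<le> r / 2"
    using riemann_sum_approx[OF cont, of "r / 2"] by auto
  obtain n0 where "\<And>n. n \<ge> n0 \<Longrightarrow> norm (h n - 0) < \<delta>"
    using LIMSEQ_D[OF h(1) \<open>\<delta> > 0\<close>] by blast
  then have "h n < \<delta>" if "n \<ge> n0" for n
    using that h(2)[of n] abs_of_pos by fastforce
  then have "norm (h n *\<^sub>R (\<Sum>k<G n. f (1 - real (Suc k) * h n)) - integral {0..1} f) < r" if "n \<ge> n0" for n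
    using approx[OF h(2) _ G, of n] that \<open>r > 0\<close> by fastforce
  then show "\<exists>n0. \<forall>n\<ge>n0. norm (h n *\<^sub>R (\<Sum>k<G n. f (1 - real (Suc k) * h n)) - integral {0..1} f) < r"
    by blast
qed

section \<open>Nested layouts\<close>

definition layout_step :: "nat \<Rightarrow> nat \<Rightarrow> nat \<Rightarrow> nat \<Rightarrow> (nat \<times> nat) + nat \<Rightarrow> nat \<Rightarrow> (nat \<times> nat) + nat" where
  "layout_step p q G R z c = (case z of
      Inl (k,a) \<Rightarrow> Inl (q*k + c, a)
    | Inr l \<Rightarrow> if c*R + l < p * (q*R div p)
               then Inl (q*G + (c*R + l) div p, (c*R + l) mod p)
               else Inr (c*R + l - p * (q*R div p)))"

lemma mixed_radix_eq:
  fixes c c' l l' R :: nat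
  assumes "c*R + l = c'*R + l'" "l < R" "l' < R"
  shows "c = c' \<and> l = l'"
  using assms by (metis add.commute div_mult_self1 div_less mod_mult_self1 mod_less add_0 not_less0)

lemma mult_add_less_mult_left:
  fixes q k c G :: nat
  assumes "k < G" "c < q"
  shows "q*k + c < q*G"
  using mult_add_less_mult[OF assms] by (simp add: mult.commute)

lemma layout_step_in_slots:
  assumes p: "p > 0" and z: "z \<in> block_slots G p R" and c: "c < q"
  shows "layout_step p q G R z c \<in> block_slots (q*G + q*R div p) p (q*R mod p)"
proof (cases z)
  case (Inl ka)
  then obtain k a where z_eq: "z = Inl (k,a)" "k < G" "a < p"
    using z by (auto simp: block_slots_def)
  then show ?thesis
    using mult_add_less_mult_left[OF z_eq(2) c] by (auto simp: layout_step_def block_slots_def)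
next
  case (Inr l)
  then have "c*R + l < q*R" using z c mult_add_less_mult[of c q l R] by (auto simp: block_slots_def)
  then have "c*R + l - p * (q*R div p) < q*R mod p" if "\<not> c*R + l < p * (q*R div p)"
    using that minus_mult_div_eq_mod[of "q*R" p] by linarith
  moreover have "(c*R + l) div p < q*R div p" if "c*R + l < p * (q*R div p)"
    using that p by (simp add: div_less_iff_less_mult mult.commute)
  ultimately show ?thesis using Inr p by (auto simp: layout_step_def block_slots_def)
qed

lemma layout_step_inj:
  assumes z: "z \<in> block_slots G p R" "z' \<in> block_slots G p R" and c: "c < q" "c' < q"
    and eq: "layout_step p q G R z c = layout_step p q G R z' c'"
  shows "z = z' \<and> c = c'"
proof -
  consider (old_old) k a k' a' where "z = Inl (k,a)" "z' = Inl (k',a')"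
    | (old_spare) k a l' where "z = Inl (k,a)" "z' = Inr l'" "k < G"
    | (spare_old) l k' a' where "z = Inr l" "z' = Inl (k',a')" "k' < G"
    | (spare_spare) l l' where "z = Inr l" "z' = Inr l'" "l < R" "l' < R"
    using z by (auto simp: block_slots_def)
  then show ?thesis
  proof cases
    case old_old
    then have "k*q + c = k'*q + c' \<and> a = a'"
      using eq by (simp add: layout_step_def mult.commute)
    then show ?thesis using old_old mixed_radix_eq c by blast
  next
    case old_spare
    then show ?thesis using eq mult_add_less_mult_left[OF old_spare(3) c(1)]
      by (auto simp: layout_step_def split: if_splits)
  next
    case spare_old
    then show ?thesis using eq mult_add_less_mult_left[OF spare_old(3) c(2)]
      by (auto simp: layout_step_def split: if_splits)
  next
    case spare_spare
    then have "c*R + l = c'*R + l'"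
      using eq by (auto simp: layout_step_def split: if_splits) (metis div_mult_mod_eq)
    then show ?thesis using mixed_radix_eq spare_spare by blast
  qed
qed

text \<open>Coordinate \<open>s < q^(n+1)\<close> is coordinate \<open>s mod q^n\<close> in copy number \<open>s div q^n\<close> of \<open>\<complex>^(q^n)\<close>;
  this is how \<open>kron_id\<close> embeds \<open>M_(q^n)\<close>. The \<open>q\<close> copies of an old block stay blocks; the \<open>q\<close>
  copies of the \<open>R = q^n mod p\<close> spare slots are packed into \<open>q R div p\<close> new blocks, numbered after
  all old ones, and \<open>q R mod p\<close> spare slots.\<close>

fun layout :: "nat \<Rightarrow> nat \<Rightarrow> nat \<Rightarrow> nat \<Rightarrow> (nat \<times> nat) + nat" where
  "layout p q 0 s = Inr 0"
| "layout p q (Suc n) s =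
     layout_step p q (q^n div p) (q^n mod p) (layout p q n (s mod q^n)) (s div q^n)"

lemma power_Suc_div: "p > 0 \<Longrightarrow> q^Suc n div p = q * (q^n div p) + q * (q^n mod p) div p"
  for p q n :: nat
proof -
  assume "p > 0"
  have "q^Suc n = q * (q^n mod p) + (q * (q^n div p)) * p"
    by (metis add.commute distrib_left mult.assoc mult.commute div_mult_mod_eq power_Suc)
  then show ?thesis using \<open>p > 0\<close> by simp
qed

lemma power_Suc_mod: "q^Suc n mod p = q * (q^n mod p) mod p"
  for p q n :: nat
  by (simp add: mod_mult_right_eq)

lemma layout_in_slots:
  assumes p: "p \<ge> 2" and q: "q > 0"
  shows "s < q^n \<Longrightarrow> layout p q n s \<in> block_slots (q^n div p) p (q^n mod p)"
proof (induction n arbitrary: s)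
  case 0
  then show ?case using p by (simp add: block_slots_def)
next
  case (Suc n)
  have "s div q^n < q" using Suc.prems by (simp add: less_mult_imp_div_less mult.commute)
  then have "layout_step p q (q^n div p) (q^n mod p) (layout p q n (s mod q^n)) (s div q^n)
      \<in> block_slots (q * (q^n div p) + q * (q^n mod p) div p) p (q * (q^n mod p) mod p)"
    using p q by (intro layout_step_in_slots Suc.IH) auto
  moreover have "p > 0" using p by simp
  ultimately show ?case
    unfolding layout.simps power_Suc_div[of p q n, OF \<open>p > 0\<close>] power_Suc_mod by simp
qed

lemma layout_inj:
  assumes p: "p \<ge> 2" and q: "q > 0"
  shows "inj_on (layout p q n) {..<q^n}"
proof (induction n)
  case (Suc n)
  show ?case
  proof (rule inj_onI)
    fix s t assume st: "s \<in> {..<q^Suc n}" "t \<in> {..<q^Suc n}"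
      and eq: "layout p q (Suc n) s = layout p q (Suc n) t"
    have "s div q^n < q" "t div q^n < q"
      using st by (auto simp: less_mult_imp_div_less mult.commute)
    then have "layout p q n (s mod q^n) = layout p q n (t mod q^n) \<and> s div q^n = t div q^n"
      using eq q by (intro layout_step_inj[OF layout_in_slots[OF p q] layout_in_slots[OF p q]]) auto
    moreover from this have "s mod q^n = t mod q^n"
      using Suc.IH q by (auto simp: inj_on_def)
    ultimately show "s = t" by (metis div_mult_mod_eq)
  qed
qed (simp add: inj_on_def)

lemma layout_bij:
  assumes "p \<ge> 2" "q > 0"
  shows "bij_betw (layout p q n) {..<q^n} (block_slots (q^n div p) p (q^n mod p))"
proof -
  have "layout p q n ` {..<q^n} = block_slots (q^n div p) p (q^n mod p)"
  proof (rule card_subset_eq)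
    show "card (layout p q n ` {..<q^n}) = card (block_slots (q^n div p) p (q^n mod p))"
      using layout_inj[OF assms] by (simp add: card_image card_block_slots)
  qed (use layout_in_slots[OF assms] in \<open>auto simp: block_slots_def\<close>)
  then show ?thesis using layout_inj[OF assms] by (simp add: bij_betw_def)
qed

lemma block_layout_layout:
  "p \<ge> 2 \<Longrightarrow> q > 0 \<Longrightarrow> block_layout (layout p q n) (q^n) (q^n div p) p (q^n mod p)"
  by (unfold_locales) (rule layout_bij)

text \<open>\<open>digit_reverse q d e\<close> reverses the \<open>d\<close> base-\<open>q\<close> digits of \<open>e\<close>: the copy indices added by
  \<open>d\<close> successive layout steps enter the block index with the most recent one lowest.\<close>

fun digit_reverse :: "nat \<Rightarrow> nat \<Rightarrow> nat \<Rightarrow> nat" where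
  "digit_reverse q 0 e = 0"
| "digit_reverse q (Suc d) e = q * digit_reverse q d (e mod q^d) + e div q^d"

lemma digit_reverse_less: "q > 0 \<Longrightarrow> e < q^d \<Longrightarrow> digit_reverse q d e < q^d"
proof (induction d arbitrary: e)
  case (Suc d)
  have "digit_reverse q d (e mod q^d) < q^d" "e div q^d < q"
    using Suc by (auto intro: less_mult_imp_div_less)
  then have "q * digit_reverse q d (e mod q^d) + e div q^d < q * (digit_reverse q d (e mod q^d) + 1)"
    by simp
  also have "\<dots> \<le> q * q^d"
    using \<open>digit_reverse q d (e mod q^d) < q^d\<close> by (intro mult_left_mono) auto
  finally show ?case by simp
qed simp

lemma digit_reverse_inj:
  "q > 0 \<Longrightarrow> e < q^d \<Longrightarrow> e' < q^d \<Longrightarrow> digit_reverse q d e = digit_reverse q d e' \<Longrightarrow> e = e'"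
proof (induction d arbitrary: e e')
  case (Suc d)
  have "e div q^d < q" "e' div q^d < q"
    using Suc.prems(2,3) by (auto intro: less_mult_imp_div_less)
  moreover have "digit_reverse q d (e mod q^d) * q + e div q^d = digit_reverse q d (e' mod q^d) * q + e' div q^d"
    using Suc.prems(4) by (simp add: mult.commute)
  ultimately have "digit_reverse q d (e mod q^d) = digit_reverse q d (e' mod q^d) \<and> e div q^d = e' div q^d"
    using mixed_radix_eq by blast
  moreover from this have "e mod q^d = e' mod q^d"
    using Suc by simp
  ultimately show ?case by (metis div_mult_mod_eq)
qed simp

lemma layout_refine_block:
  assumes q: "q > 0"
  shows "s < q^(m+d) \<Longrightarrow> layout p q m (s mod q^m) = Inl (k,a) \<Longrightarrow>
    layout p q (m+d) s = Inl (k * q^d + digit_reverse q d (s div q^m), a)"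
proof (induction d arbitrary: s)
  case (Suc d)
  define s' where "s' = s mod q^(m+d)"
  have "s' < q^(m+d)" "s' mod q^m = s mod q^m"
    using q by (simp_all add: s'_def power_add mod_mod_cancel)
  then have IH: "layout p q (m+d) s' = Inl (k * q^d + digit_reverse q d (s' div q^m), a)"
    using Suc by simp
  have "s' div q^m = (s div q^m) mod q^d"
    using q unfolding s'_def power_add mod_mult2_eq by simp
  moreover have "s div q^(m+d) = (s div q^m) div q^d"
    by (simp add: power_add div_mult2_eq)
  ultimately show ?case
    using IH by (simp add: layout_step_def s'_def algebra_simps)
qed simp

lemma mult_div_le_mult_div: "a * (b div c) \<le> a * b div c" for a b c :: nat
proof (cases "c = 0")
  case False
  have "a * (b div c) = a * (b div c) * c div c" using False by simp
  also have "\<dots> \<le> a * b div c"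
    by (intro div_le_mono) (simp add: mult.assoc)
  finally show ?thesis .
qed simp

lemma layout_refine_spare:
  assumes q: "q > 0"
  shows "s < q^(m+d) \<Longrightarrow> layout p q m (s mod q^m) = Inr l \<Longrightarrow>
    (\<exists>l'. layout p q (m+d) s = Inr l') \<or>
    (\<exists>K a. layout p q (m+d) s = Inl (K,a) \<and> q^d * (q^m div p) \<le> K)"
proof (induction d arbitrary: s)
  case (Suc d)
  define s' where "s' = s mod q^(m+d)"
  have "s' < q^(m+d)" "s' mod q^m = s mod q^m"
    using q by (simp_all add: s'_def power_add mod_mod_cancel)
  then have IH: "(\<exists>l'. layout p q (m+d) s' = Inr l') \<or>
      (\<exists>K a. layout p q (m+d) s' = Inl (K,a) \<and> q^d * (q^m div p) \<le> K)"
    using Suc by simp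
  have step: "layout p q (m + Suc d) s
      = layout_step p q (q^(m+d) div p) (q^(m+d) mod p) (layout p q (m+d) s') (s div q^(m+d))"
    by (simp add: s'_def)
  have "q^Suc d * (q^m div p) \<le> q * (q^(m+d) div p)"
    using mult_div_le_mult_div[of "q^d" "q^m" p] by (simp add: power_add mult.assoc mult.commute)
  then have new_blocks: "q^Suc d * (q^m div p) \<le> q * (q^(m+d) div p) + i" for i
    by linarith
  from IH show ?case
  proof
    assume "\<exists>l'. layout p q (m+d) s' = Inr l'"
    then show ?thesis unfolding step using new_blocks by (auto simp: layout_step_def)
  next
    assume "\<exists>K a. layout p q (m+d) s' = Inl (K,a) \<and> q^d * (q^m div p) \<le> K"
    then obtain K a where K: "layout p q (m+d) s' = Inl (K,a)" "q^d * (q^m div p) \<le> K" by blast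
    have "q^Suc d * (q^m div p) \<le> q * K + s div q^(m+d)"
    proof -
      have "q * (q^d * (q^m div p)) \<le> q * K" using K(2) by (rule mult_le_mono2)
      moreover have "q^Suc d * (q^m div p) = q * (q^d * (q^m div p))" by simp
      ultimately show ?thesis by linarith
    qed
    then show ?thesis unfolding step using K(1) by (simp add: layout_step_def)
  qed
qed simp

lemma kron_id_power:
  assumes A: "A \<in> carrier_mat M M" and M: "M > 0" and q: "q > 0"
  shows "(kron_id q ^^ d) A
      = mat (q^d*M) (q^d*M) (\<lambda>(s,t). if s div M = t div M then A $$ (s mod M, t mod M) else 0)"
proof (induction d)
  case 0
  show ?case using A by (auto intro!: eq_matI)
next
  case (Suc d)
  have QM: "q^d * M > 0" using M q by simp
  show ?case
    unfolding funpow.simps(2) comp_apply Suc.IH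
  proof (rule eq_matI)
    fix i j assume "i < dim_row (mat (q^Suc d*M) (q^Suc d*M)
        (\<lambda>(s,t). if s div M = t div M then A $$ (s mod M, t mod M) else 0))"
      "j < dim_col (mat (q^Suc d*M) (q^Suc d*M)
        (\<lambda>(s,t). if s div M = t div M then A $$ (s mod M, t mod M) else 0))"
    then have ij: "i < q * (q^d * M)" "j < q * (q^d * M)" by auto
    have "i div (q^d*M) = (i div M) div q^d" "j div (q^d*M) = (j div M) div q^d"
      "(i mod (q^d*M)) div M = (i div M) mod q^d" "(j mod (q^d*M)) div M = (j div M) mod q^d"
      "(i mod (q^d*M)) mod M = i mod M" "(j mod (q^d*M)) mod M = j mod M"
      using M by (simp_all add: div_mult2_eq mod_mult2_eq mult.commute)
    moreover have "(i div M) div q^d = (j div M) div q^d \<and> (i div M) mod q^d = (j div M) mod q^d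
        \<longleftrightarrow> i div M = j div M"
      by (metis div_mult_mod_eq)
    ultimately show "kron_id q (mat (q^d*M) (q^d*M)
          (\<lambda>(s,t). if s div M = t div M then A $$ (s mod M, t mod M) else 0)) $$ (i,j)
        = mat (q^Suc d*M) (q^Suc d*M)
          (\<lambda>(s,t). if s div M = t div M then A $$ (s mod M, t mod M) else 0) $$ (i,j)"
      using ij QM by (auto simp: kron_id_def)
  qed (simp_all add: kron_id_def)
qed

lemma inherited_block_bounds:
  assumes p: "p \<ge> 2" and q: "q > 0"
    and u: "u < q^(m+d)" and old: "layout p q m (u mod q^m) = Inl (k,a)"
  shows "digit_reverse q d (u div q^m) < q^d"
    and "k * q^d + digit_reverse q d (u div q^m) < q^d * (q^m div p)"
proof -
  have "k < q^m div p"
    using layout_in_slots[OF p q, of "u mod q^m" m] old q by (auto simp: block_slots_def)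
  have "u < q^d * q^m" using u by (simp add: power_add mult.commute)
  then show r: "digit_reverse q d (u div q^m) < q^d"
    using q by (intro digit_reverse_less less_mult_imp_div_less)
  have "k * q^d + digit_reverse q d (u div q^m) < (k+1) * q^d" using r by simp
  also have "\<dots> \<le> (q^m div p) * q^d"
    using \<open>k < q^m div p\<close> by (intro mult_right_mono) auto
  also have "\<dots> = q^d * (q^m div p)" by simp
  finally show "k * q^d + digit_reverse q d (u div q^m) < q^d * (q^m div p)" .
qed

lemma inherited_block_index_eq_iff:
  assumes q: "q > 0" and st: "s < q^(m+d)" "t < q^(m+d)"
    and r: "digit_reverse q d (s div q^m) < q^d" "digit_reverse q d (t div q^m) < q^d"
  shows "k * q^d + digit_reverse q d (s div q^m) = k' * q^d + digit_reverse q d (t div q^m)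
    \<longleftrightarrow> k = k' \<and> s div q^m = t div q^m"
proof
  assume "k * q^d + digit_reverse q d (s div q^m) = k' * q^d + digit_reverse q d (t div q^m)"
  then have "k = k' \<and> digit_reverse q d (s div q^m) = digit_reverse q d (t div q^m)"
    using mixed_radix_eq r by blast
  moreover have "s < q^d * q^m" "t < q^d * q^m" using st by (simp_all add: power_add mult.commute)
  then have "s div q^m < q^d" "t div q^m < q^d" by (simp_all add: less_mult_imp_div_less)
  ultimately show "k = k' \<and> s div q^m = t div q^m"
    using digit_reverse_inj[OF q] by blast
qed simp

text \<open>A block of level \<open>m\<close> becomes \<open>q^d\<close> blocks of level \<open>m + d\<close>, numbered consecutively and
  carrying its weight; the blocks of level \<open>m + d\<close> made of spare coordinates get weight \<open>0\<close>.\<close>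

lemma amplify_entry_layout_refine:
  assumes p: "p \<ge> 2" and q: "q > 0" and st: "s < q^(m+d)" "t < q^(m+d)"
  shows "amplify_entry (layout p q (m+d)) (\<lambda>K. if K < q^d * (q^m div p) then c (K div q^d) else 0) x s t
    = (if s div q^m = t div q^m then amplify_entry (layout p q m) c x (s mod q^m) (t mod q^m) else 0)"
    (is "amplify_entry _ ?c x s t = _")
proof -
  have spare: "(case layout p q (m+d) u of Inl (K,a) \<Rightarrow> ?c K = 0 | Inr _ \<Rightarrow> True)"
    if "u < q^(m+d)" "layout p q m (u mod q^m) = Inr l" for u l
    using layout_refine_spare[OF q that] by auto
  show ?thesis
  proof (cases "layout p q m (s mod q^m)")
    case (Inl ka)
    then obtain k a where s_old: "layout p q m (s mod q^m) = Inl (k,a)" by (cases ka) auto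
    show ?thesis
    proof (cases "layout p q m (t mod q^m)")
      case (Inl kb)
      then obtain k' b where t_old: "layout p q m (t mod q^m) = Inl (k',b)" by (cases kb) auto
      note bounds = inherited_block_bounds[OF p q st(1) s_old] inherited_block_bounds[OF p q st(2) t_old]
      have "k * q^d + digit_reverse q d (s div q^m) = k' * q^d + digit_reverse q d (t div q^m)
          \<longleftrightarrow> k = k' \<and> s div q^m = t div q^m"
        by (rule inherited_block_index_eq_iff[OF q st bounds(1) bounds(3)])
      moreover have "(k * q^d + digit_reverse q d (s div q^m)) div q^d = k"
        using bounds(1) q by (simp add: add.commute[of "k * q^d"])
      ultimately show ?thesis
        using bounds layout_refine_block[OF q st(1) s_old] layout_refine_block[OF q st(2) t_old]
          s_old t_old
        by (auto simp: amplify_entry_def)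
    next
      case (Inr l)
      have "amplify_entry (layout p q (m+d)) ?c x s t = 0"
        using spare[OF st(2) Inr] by (intro amplify_entry_eq_0I) simp
      then show ?thesis using Inr by (simp add: amplify_entry_def split: sum.splits)
    qed
  next
    case (Inr l)
    have "amplify_entry (layout p q (m+d)) ?c x s t = 0"
      using spare[OF st(1) Inr] by (intro amplify_entry_eq_0I) simp
    then show ?thesis using Inr by (simp add: amplify_entry_def)
  qed
qed

lemma uhf_emb_amplify_layout:
  assumes p: "p \<ge> 2" and q: "q > 0"
  shows "uhf_emb q m (m+d) (amplify (layout p q m) (q^m) c x)
    = amplify (layout p q (m+d)) (q^(m+d)) (\<lambda>K. if K < q^d * (q^m div p) then c (K div q^d) else 0) x"
proof -
  have "q^(m+d) = q^d * q^m" by (simp add: power_add)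
  then show ?thesis
    unfolding uhf_emb_def using q
    by (intro eq_matI) (simp_all add: kron_id_power[OF amplify_carrier(1)] amplify_entry_layout_refine[OF p q])
qed

section \<open>The map \<open>\<phi>\<close>\<close>

definition weight :: "nat \<Rightarrow> nat \<Rightarrow> nat \<Rightarrow> nat \<Rightarrow> real" where
  "weight p q n k = 1 - real p * real (Suc k) / real q ^ n"

definition phi :: "nat \<Rightarrow> nat \<Rightarrow> complex mat \<Rightarrow> nat \<Rightarrow> complex mat" where
  "phi p q x n = amplify (layout p q n) (q^n) (\<lambda>k. complex_of_real (weight p q n k)) x"

lemma phi_carrier [simp]: "phi p q x n \<in> carrier_mat (q^n) (q^n)"
  by (simp add: phi_def)

lemma weight_bounds:
  assumes "q > 0" "k < q^n div p"
  shows "0 \<le> weight p q n k" "weight p q n k \<le> 1"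
proof -
  have "p * Suc k \<le> p * (q^n div p)" using assms by (intro mult_left_mono) auto
  also have "\<dots> \<le> q^n" by simp
  finally have "real p * real (Suc k) \<le> real q ^ n" by (metis of_nat_le_iff of_nat_mult of_nat_power)
  then show "0 \<le> weight p q n k" using assms by (simp add: weight_def divide_le_eq)
  show "weight p q n k \<le> 1" by (simp add: weight_def)
qed

lemma weight_eq_level_add:
  "weight p q (m+d) K = 1 - real p * (real K + 1) / (real q ^ d * real q ^ m)"
  by (simp add: weight_def power_add mult.commute)

lemma weight_inherited_block_diff:
  assumes q: "q > 0" and K: "K < q^d * (q^m div p)"
  shows "\<bar>weight p q m (K div q^d) - weight p q (m+d) K\<bar> \<le> real p / real q ^ m"
proof -
  define D Q k where "D = real q ^ d" and "Q = real q ^ m" and "k = K div q^d"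
  have pos: "D > 0" "Q > 0" using q by (simp_all add: D_def Q_def)
  have "k * q^d + K mod q^d = K" "K mod q^d < q^d"
    using q div_mult_mod_eq[of K "q^d"] by (simp_all add: k_def)
  then have "real (k * q^d) \<le> real K" "real (K + 1) \<le> real ((k + 1) * q^d)"
    unfolding of_nat_le_iff by (simp_all add: add_mult_distrib)
  then have t: "- D \<le> real K + 1 - (real k + 1) * D" "real K + 1 - (real k + 1) * D \<le> 0"
    by (simp_all add: D_def algebra_simps)
  have "weight p q m k - weight p q (m+d) K = real p * (real K + 1 - (real k + 1) * D) / (D * Q)"
    unfolding weight_eq_level_add using pos by (simp add: weight_def D_def Q_def field_simps)
  moreover have "\<bar>real p * (real K + 1 - (real k + 1) * D)\<bar> \<le> real p * D"
    using mult_left_mono[OF t(1), of "real p"] mult_left_mono[OF t(2), of "real p"] pos by simp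
  then have "\<bar>real p * (real K + 1 - (real k + 1) * D)\<bar> / (D * Q) \<le> real p * D / (D * Q)"
    using pos by (intro divide_right_mono) auto
  ultimately show ?thesis using pos by (simp add: k_def Q_def abs_div)
qed

lemma weight_new_block_le:
  assumes p: "p > 0" and q: "q > 0" and K: "q^d * (q^m div p) \<le> K"
  shows "weight p q (m+d) K \<le> real p / real q ^ m"
proof -
  define D Q G where "D = real q ^ d" and "Q = real q ^ m" and "G = real (q^m div p)"
  have pos: "D > 0" "Q > 0" using q by (simp_all add: D_def Q_def)
  have "q^m < p * (q^m div p) + p"
    using mod_less_divisor[OF p, of "q^m"] mult_div_mod_eq[of p "q^m"] by linarith
  then have "real (q^m) < real (p * (q^m div p) + p)"
    unfolding of_nat_less_iff .
  then have Q: "Q < real p * G + real p"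
    by (simp add: Q_def G_def)
  have "real (q^d * (q^m div p)) \<le> real K"
    using K unfolding of_nat_le_iff .
  then have "D * G \<le> real K"
    by (simp add: D_def G_def)
  then have "D * Q - real p * D \<le> real p * (real K + 1)"
    using Q pos mult_left_mono[of "D * G" "real K" "real p"] mult_strict_left_mono[OF Q pos(1)]
    by (simp add: algebra_simps)
  then have "(D * Q - real p * D) / (D * Q) \<le> real p * (real K + 1) / (D * Q)"
    using pos by (intro divide_right_mono) auto
  moreover have "weight p q (m+d) K = 1 - real p * (real K + 1) / (D * Q)"
    by (simp add: weight_eq_level_add D_def Q_def)
  ultimately have "weight p q (m+d) K \<le> real p / Q"
    using pos by (simp add: diff_divide_distrib)
  then show ?thesis by (simp add: Q_def)
qed

lemma weight_inherited_diff:
  assumes p: "p > 0" and q: "q > 0" and K: "K < q^(m+d) div p"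
  shows "\<bar>(if K < q^d * (q^m div p) then weight p q m (K div q^d) else 0) - weight p q (m+d) K\<bar>
    \<le> real p / real q ^ m"
  using weight_inherited_block_diff[OF q] weight_new_block_le[OF p q, of d m K]
    weight_bounds(1)[OF q K] by auto

lemma opnorm_uhf_emb_phi_diff:
  assumes p: "p \<ge> 2" and q: "q > 0" and x: "x \<in> carrier_mat p p" and mn: "m \<le> n"
  shows "opnorm (uhf_emb q m n (phi p q x m) - phi p q x n) \<le> real p / real q ^ m * opnorm x"
proof -
  define d where "d = n - m"
  have n: "n = m + d" using mn by (simp add: d_def)
  have "uhf_emb q m n (phi p q x m) - phi p q x n = amplify (layout p q n) (q^n)
      (\<lambda>K. complex_of_real ((if K < q^d * (q^m div p) then weight p q m (K div q^d) else 0)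
        - weight p q (m+d) K)) x"
    unfolding phi_def n uhf_emb_amplify_layout[OF p q] amplify_diff_weights
    by (auto intro!: arg_cong[where f = "\<lambda>c. amplify _ _ c x"])
  also have "opnorm \<dots> \<le> real p / real q ^ m * opnorm x"
  proof (rule block_layout.opnorm_amplify_le[OF block_layout_layout[OF p q] x])
    fix K assume "K < q^n div p"
    then show "cmod (complex_of_real ((if K < q^d * (q^m div p) then weight p q m (K div q^d) else 0)
        - weight p q (m+d) K)) \<le> real p / real q ^ m"
      unfolding norm_of_real n using p q by (intro weight_inherited_diff) auto
  qed simp
  finally show ?thesis .
qed

lemma phi_uhf_elem:
  assumes p: "p \<ge> 2" and q: "q \<ge> 2" and x: "x \<in> carrier_mat p p"
  shows "uhf_elem q (phi p q x)"
  unfolding uhf_elem_def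
proof (intro conjI allI impI)
  fix e :: real assume "e > 0"
  define B where "B = opnorm x + 1"
  have B: "B > 0" using opnorm_nonneg[of x] by (simp add: B_def)
  obtain N where N: "real p / real q ^ N < e / B"
    using LIMSEQ_D[OF LIMSEQ_divide_realpow_zero[of "real q" "real p"], of "e / B"] q \<open>e > 0\<close> B
    by fastforce
  show "\<exists>N. \<forall>m n. N \<le> m \<longrightarrow> m \<le> n \<longrightarrow> opnorm (uhf_emb q m n (phi p q x m) - phi p q x n) < e"
  proof (intro exI allI impI)
    fix m n assume "N \<le> m" "m \<le> n"
    have "opnorm (uhf_emb q m n (phi p q x m) - phi p q x n) \<le> real p / real q ^ m * opnorm x"
      using p q x \<open>m \<le> n\<close> by (intro opnorm_uhf_emb_phi_diff) auto
    also have "\<dots> \<le> real p / real q ^ N * B"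
      using q \<open>N \<le> m\<close> opnorm_nonneg[of x]
      by (intro mult_mono divide_left_mono power_increasing) (auto simp: B_def)
    also have "\<dots> < e"
      using N B by (simp add: pos_less_divide_eq)
    finally show "opnorm (uhf_emb q m n (phi p q x m) - phi p q x n) < e" .
  qed
qed simp

lemma opnorm_phi_le:
  assumes p: "p \<ge> 2" and q: "q > 0" and x: "x \<in> carrier_mat p p"
  shows "opnorm (phi p q x k) \<le> opnorm x"
proof -
  have "opnorm (phi p q x k) \<le> 1 * opnorm x"
    unfolding phi_def
    by (rule block_layout.opnorm_amplify_le[OF block_layout_layout[OF p q] x])
      (use weight_bounds[OF q] in auto)
  then show ?thesis by simp
qed

lemma phi_opnorm_tendsto:
  assumes p: "p \<ge> 2" and q: "q \<ge> 2" and x: "x \<in> carrier_mat p p"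
  shows "(\<lambda>k. opnorm (phi p q x k)) \<longlonglongrightarrow> opnorm x"
proof (rule tendsto_sandwich)
  have "(\<lambda>k. (1 - real p / real q ^ k) * opnorm x) \<longlonglongrightarrow> (1 - 0) * opnorm x"
    using q by (intro tendsto_intros LIMSEQ_divide_realpow_zero) simp
  then show "(\<lambda>k. (1 - real p / real q ^ k) * opnorm x) \<longlonglongrightarrow> opnorm x" by simp
  show "\<forall>\<^sub>F k in sequentially. opnorm (phi p q x k) \<le> opnorm x"
    using opnorm_phi_le[OF p _ x] q by simp
  show "\<forall>\<^sub>F k in sequentially. (1 - real p / real q ^ k) * opnorm x \<le> opnorm (phi p q x k)"
    unfolding eventually_sequentially
  proof (intro exI allI impI)
    fix k assume "k \<ge> p"
    have "p < 2^p" by (rule less_exp)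
    also have "\<dots> \<le> q^k"
      using q \<open>k \<ge> p\<close> by (meson le_trans power_increasing power_mono zero_le_numeral one_le_numeral)
    finally have blocks: "0 < q^k div p" using p by (simp add: div_greater_zero_iff)
    then have "cmod (complex_of_real (weight p q k 0)) * opnorm x \<le> opnorm (phi p q x k)"
      using p q unfolding phi_def
      by (intro block_layout.opnorm_amplify_ge[OF block_layout_layout x]) auto
    moreover have "cmod (complex_of_real (weight p q k 0)) = 1 - real p / real q ^ k"
      using weight_bounds(1)[of q 0 k p] blocks q unfolding norm_of_real by (simp add: weight_def)
    ultimately show "(1 - real p / real q ^ k) * opnorm x \<le> opnorm (phi p q x k)" by simp
  qed
qed simp

lemma phi_one:
  assumes p: "p \<ge> 2" and q: "q > 0"
  shows "phi p q (1\<^sub>m p) k = diag_of (q^k)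
    (\<lambda>s. complex_of_real (case layout p q k s of Inl (K,a) \<Rightarrow> weight p q k K | Inr _ \<Rightarrow> 0))"
  unfolding phi_def block_layout.amplify_one[OF block_layout_layout[OF p q]]
  by (intro arg_cong[where f = "diag_of _"] ext) (simp split: sum.splits)

lemma ntrace_mat_fun_phi_one:
  assumes p: "p \<ge> 2" and q: "q > 0" and f0: "f 0 = 0"
  shows "ntrace (mat_fun f (phi p q (1\<^sub>m p) k))
    = (real p / real q ^ k) *\<^sub>R (\<Sum>K < q^k div p. f (1 - real (Suc K) * (real p / real q ^ k)))"
proof -
  have "ntrace (mat_fun f (phi p q (1\<^sub>m p) k))
      = (\<Sum>s<q^k. f (case layout p q k s of Inl (K,a) \<Rightarrow> weight p q k K | Inr _ \<Rightarrow> 0)) / of_nat (q^k)"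
    unfolding phi_one[OF p q] by (rule ntrace_mat_fun_diag)
  also have "(\<Sum>s<q^k. f (case layout p q k s of Inl (K,a) \<Rightarrow> weight p q k K | Inr _ \<Rightarrow> 0))
      = of_nat p * (\<Sum>K<q^k div p. f (weight p q k K))"
    using f0 block_layout.sum_comp_L[OF block_layout_layout[OF p q],
        of "\<lambda>z. f (case z of Inl (K,a) \<Rightarrow> weight p q k K | Inr _ \<Rightarrow> 0)" k]
    by (simp add: sum_distrib_left)
  finally show ?thesis
    by (simp add: weight_def scaleR_conv_of_real sum_distrib_left sum_divide_distrib mult.commute)
qed

lemma phi_one_trace_tendsto:
  assumes p: "p \<ge> 2" and q: "q \<ge> 2" and f: "continuous_on {0..1} f" "f 0 = 0"
  shows "(\<lambda>k. ntrace (mat_fun f (phi p q (1\<^sub>m p) k))) \<longlonglongrightarrow> integral {0..1} f"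
proof -
  define h where "h k = real p / real q ^ k" for k
  have grid: "real (q^k div p) * h k \<le> 1" "1 - real (q^k div p) * h k \<le> h k" for k
  proof -
    have Q: "real q ^ k > 0" using q by simp
    have eq: "real p * real (q^k div p) + real (q^k mod p) = real q ^ k"
      by (metis mult_div_mod_eq of_nat_add of_nat_mult of_nat_power)
    then have "1 - real (q^k div p) * h k = real (q^k mod p) / real q ^ k"
      using Q by (simp add: h_def field_simps)
    also have "\<dots> \<le> h k"
      unfolding h_def using p Q by (intro divide_right_mono) auto
    finally show "1 - real (q^k div p) * h k \<le> h k" .
    show "real (q^k div p) * h k \<le> 1"
      using eq Q by (simp add: h_def divide_le_eq mult.commute)
  qed
  have "(\<lambda>k. h k *\<^sub>R (\<Sum>K < q^k div p. f (1 - real (Suc K) * h k))) \<longlonglongrightarrow> integral {0..1} f"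
    using p q grid
    by (intro riemann_sum_tendsto f(1)) (auto simp: h_def intro: LIMSEQ_divide_realpow_zero)
  then show ?thesis
    using p q f(2) by (simp add: ntrace_mat_fun_phi_one h_def)
qed

lemma psd_blockmat_phi:
  assumes p: "p \<ge> 2" and q: "q > 0" and psd: "psd (blockmat n p X)"
  shows "psd (blockmat n (q^k) (\<lambda>i j. phi p q (X i j) k))"
  unfolding phi_def
  using block_layout.psd_blockmat_amplify[OF block_layout_layout[OF p q] psd] weight_bounds[OF q]
  by blast

lemma psd_phi_one:
  assumes p: "p \<ge> 2" and q: "q > 0"
  shows "psd (phi p q (1\<^sub>m p) k)"
proof -
  have "blockmat 1 m (\<lambda>_ _. A) = A" if "A \<in> carrier_mat m m" for A :: "complex mat" and m
    using that by (intro eq_matI) (auto simp: blockmat_def)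
  moreover have "psd (1\<^sub>m p :: complex mat)"
    unfolding psd_def by (auto intro!: exI[of _ "1\<^sub>m p"] simp: mat_adjoint_one)
  ultimately show ?thesis
    using psd_blockmat_phi[OF p q, of 1 "\<lambda>_ _. 1\<^sub>m p" k] by simp
qed

lemma uhf_norm_phi:
  "p \<ge> 2 \<Longrightarrow> q \<ge> 2 \<Longrightarrow> x \<in> carrier_mat p p \<Longrightarrow> uhf_norm (phi p q x) = opnorm x"
  unfolding uhf_norm_def by (rule limI) (rule phi_opnorm_tendsto)

lemma phi_cpc_order_zero:
  assumes p: "p \<ge> 2" and q: "q \<ge> 2"
  shows "cpc_order_zero p q (phi p q)"
  unfolding cpc_order_zero_def
proof (intro conjI ballI allI impI)
  have layout: "block_layout (layout p q k) (q^k) (q^k div p) p (q^k mod p)" for k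
    using p q by (intro block_layout_layout) auto
  fix x y :: "complex mat" and c :: complex
  assume x: "x \<in> carrier_mat p p" and y: "y \<in> carrier_mat p p"
  have "(\<lambda>k. c \<cdot>\<^sub>m phi p q x k + phi p q y k) = phi p q (c \<cdot>\<^sub>m x + y)"
    using block_layout.amplify_linear[OF layout x y] by (intro ext) (simp add: phi_def)
  then show "uhf_eq (phi p q (c \<cdot>\<^sub>m x + y)) (\<lambda>k. c \<cdot>\<^sub>m phi p q x k + phi p q y k)"
    by (simp add: uhf_eq_refl)
  assume "x * y = 0\<^sub>m p p"
  then have "(\<lambda>k. phi p q x k * phi p q y k) = (\<lambda>k. 0\<^sub>m (q^k) (q^k))"
    using block_layout.amplify_mult[OF layout x y] block_layout.amplify_zero[OF layout]
    by (intro ext) (simp add: phi_def)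
  then show "uhf_eq (\<lambda>k. phi p q x k * phi p q y k) (\<lambda>k. 0\<^sub>m (q^k) (q^k))"
    by (simp add: uhf_eq_refl)
next
  fix x :: "complex mat" assume x: "x \<in> carrier_mat p p"
  show "uhf_elem q (phi p q x)" using phi_uhf_elem[OF p q x] .
  show "uhf_norm (phi p q x) \<le> opnorm x" using uhf_norm_phi[OF p q x] by simp
next
  fix n :: nat and X :: "nat \<Rightarrow> nat \<Rightarrow> complex mat"
  assume X: "\<forall>i<n. \<forall>j<n. X i j \<in> carrier_mat p p" "psd (blockmat n p X)"
  define t where "t k = blockmat n (q^k) (\<lambda>i j. phi p q (X i j) k)" for k
  have "t k \<in> carrier_mat (n * q^k) (n * q^k) \<and> psd (t k)" for k
    unfolding t_def using p q X(2) psd_blockmat_phi[of p q n X k] by (simp add: blockmat_def)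
  moreover have "(\<lambda>k. opnorm (t k - t k)) \<longlonglongrightarrow> 0"
    using uhf_eq_refl[of t] by (simp add: uhf_eq_def)
  ultimately have "\<exists>t'. (\<forall>k. t' k \<in> carrier_mat (n * q^k) (n * q^k) \<and> psd (t' k))
      \<and> (\<lambda>k. opnorm (t k - t' k)) \<longlonglongrightarrow> 0"
    by blast
  then show "uhf_matpos q n (\<lambda>i j. phi p q (X i j))"
    unfolding uhf_matpos_def t_def .
qed

lemma phi_one_lebesgue_contraction:
  assumes p: "p \<ge> 2" and q: "q \<ge> 2"
  shows "lebesgue_contraction q (phi p q (1\<^sub>m p))"
  unfolding lebesgue_contraction_def
proof (intro conjI allI impI)
  let ?h = "phi p q (1\<^sub>m p)"
  have "opnorm (?h k) \<le> opnorm (1\<^sub>m p)" for k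
    using p q by (intro opnorm_phi_le) auto
  then have levels: "\<forall>k. ?h k \<in> carrier_mat (q^k) (q^k) \<and> psd (?h k) \<and> opnorm (?h k) \<le> 1"
    using p q psd_phi_one opnorm_one[of p] by (auto intro: order_trans)
  show "uhf_elem q ?h" using phi_uhf_elem[OF p q] by simp
  show "uhf_pos q ?h"
    unfolding uhf_pos_def using levels uhf_eq_refl[of ?h] by blast
  show "uhf_norm ?h \<le> 1"
    using uhf_norm_phi[OF p q, of "1\<^sub>m p"] opnorm_one[of p] by simp
  fix f :: "real \<Rightarrow> complex" assume "continuous_on {0..1} f \<and> f 0 = 0"
  then have "(\<lambda>k. ntrace (mat_fun f (?h k))) \<longlonglongrightarrow> integral {0..1} f"
    using phi_one_trace_tendsto[OF p q] by blast
  then show "\<exists>t. (\<forall>k. t k \<in> carrier_mat (q^k) (q^k) \<and> psd (t k) \<and> opnorm (t k) \<le> 1) \<and>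
      uhf_eq ?h t \<and> (\<lambda>k. ntrace (mat_fun f (t k))) \<longlonglongrightarrow> integral {0..1} f"
    using levels uhf_eq_refl[of ?h] by blast
qed

theorem lemma4p5:
  fixes p q :: nat
  assumes "p \<ge> 2" and "q \<ge> 2"
  shows "\<exists>\<phi>. cpc_order_zero p q \<phi> \<and> lebesgue_contraction q (\<phi> (1\<^sub>m p))"
  using phi_cpc_order_zero[OF assms] phi_one_lebesgue_contraction[OF assms] by blast

end
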